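(* Let $S$ be a set of monic $\Omega$-polynomials in $K\langle X;\Omega\rangle$, $>$ a monomial ordering on $\mathfrak{S}(X)$, and $Id(S)$ the ideal generated by $S$. The following are equivalent: (I) $S$ is a Gröbner–Shirshov basis in $K\langle X;\Omega\rangle$. (II) For every nonzero $f\in Id(S)$, $\bar f=u|_{\bar s}$ for some $u\in\mathfrak{S}^\star(X)$ and $s\in S$. (II$'$) Every nonzero $f\in Id(S)$ can be written $f=\alpha_1u_1|_{s_1}+\cdots+\alpha_nu_n|_{s_n}$ with $\alpha_i\in K$, $s_i\in S$, $u_i\in\mathfrak{S}^\star(X)$ and $u_1|_{\overline{s_1}}>u_2|_{\overline{s_2}}>\cdots>u_n|_{\overline{s_n}}$. (III) The set $Irr(S)=\{w\in\mathfrak{S}(X)\mid w\ne u|_{\bar s}\text{ for all }u\in\mathfrak{S}^\star(X),\ s\in S\}$ is (its image is) a $K$-basis of $K\langle X;\Omega|S\rangle=K\langle X;\Omega\rangle/Id(S)$.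
   Context: General setup. $K$ is a commutative ring with unit, $X$ a set, and $\Omega=\bigcup_{n\ge1}\Omega_n$ a set of operation symbols, $\Omega_n$ being the $n$-ary ones. For a set $A$ let $\Omega(A)=\{\delta(u_1,\dots,u_t)\mid t\ge1,\ \delta\in\Omega_t,\ u_i\in A\}$ (formal expressions). For a set $Y$, $S(Y)$ denotes the free semigroup (nonempty words) and $Y^*$ the free monoid on $Y$. Put $\mathfrak{S}_0=S(X)$ and $\mathfrak{S}_n=S(X\cup\Omega(\mathfrak{S}_{n-1}))$ for $n\ge1$; then $\mathfrak{S}_0\subset\mathfrak{S}_1\subset\cdots$ and $\mathfrak{S}(X)=\bigcup_{n\ge0}\mathfrak{S}_n$ (the $\Omega$-words). $K\langle X;\Omega\rangle$ is the free $K$-module with basis $\mathfrak{S}(X)$, with associative multiplication given by concatenation and each $\delta\in\Omega_n$ extended $K$-multilinearly; it is the free associative algebra with multiple linear operators $\Omega$ on $X$; its elements are $\Omega$-polynomials. The prime $\Omega$-words are the elements of $X\cup\Omega(\mathfrak{S}(X))$; each $u\in\mathfrak{S}(X)$ is uniquely a product $u_1\cdots u_n$ of prime $\Omega$-words, and $bre(u)=n$. For a symbol $\star\notin X$, $\mathfrak{S}^\star(X)$ is the set of elements of $\mathfrak{S}(X\cup\{\star\})$ containing exactly one occurrence of $\star$; for $u\in\mathfrak{S}^\star(X)$ and an $\Omega$-polynomial $s$, $u|_s$ denotes the result of replacing $\star$ by $s$ (extended linearly in $s$). A monomial ordering is a well ordering $>$ on $\mathfrak{S}(X)$ such that $w>v$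 implies $u|_w>u|_v$ for all $u\in\mathfrak{S}^\star(X)$. For nonzero $f$, $\bar f$ is its largest $\Omega$-word; $f$ is monic if the coefficient of $\bar f$ is $1$. The ideal $Id(S)$ generated by a set $S$ is the $K$-span of all $u|_s$ with $u\in\mathfrak{S}^\star(X)$, $s\in S$, and $K\langle X;\Omega|S\rangle=K\langle X;\Omega\rangle/Id(S)$. For monic $f,g$: (I) if $w=\bar f a=b\bar g$ for some $a,b\in\mathfrak{S}(X)$ with $bre(w)<bre(\bar f)+bre(\bar g)$, then $(f,g)_w=fa-bg$ is an intersection composition; (II) if $w=\bar f=u|_{\bar g}$ for some $u\in\mathfrak{S}^\star(X)$, then $(f,g)_w=f-u|_g$ is an including composition. For a set $S$ of monic $\Omega$-polynomials, an $\Omega$-word $w$, and $\Omega$-polynomials $p,q$, we write $p\equiv q\ \mathrm{mod}(S,w)$ if $p-q=\sum_i\alpha_iu_i|_{s_i}$ with $\alpha_i\in K$, $u_i\in\mathfrak{S}^\star(X)$, $s_i\in S$ and $u_i|_{\overline{s_i}}<w$ for all $i$. $S$ is a Gröbner–Shirshov basis if every composition $(f,g)_w$ with $f,g\in S$ satisfies $(f,g)_w\equiv0\ \mathrm{mod}(S,w)$. *)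

theory Defs
  imports Main "HOL-Library.Poly_Mapping"
begin

text \<open>Prime Omega-words: a letter of X (here the type 'x), or an operation symbol
  applied to a list of Omega-words (each an nonempty list of prime words).
  Omega is given by a type 'o together with an arity function ar; the symbols of
  Omega_n are those d with ar d = n, and only symbols with ar d >= 1 occur.\<close>

datatype ('x, 'o) prm = Var 'x | Op 'o "('x, 'o) prm list list"

type_synonym ('x, 'o) oword = "('x, 'o) prm list"

fun valid_prm :: "('o \<Rightarrow> nat) \<Rightarrow> ('x, 'o) prm \<Rightarrow> bool" where
  "valid_prm ar (Var x) = True"
| "valid_prm ar (Op d uss) =
     (1 \<le> ar d \<and> length uss = ar d \<and>
      (\<forall>us \<in> set uss. us \<noteq> [] \<and> (\<forall>p \<in> set us. valid_prm ar p)))"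

definition oword :: "('o \<Rightarrow> nat) \<Rightarrow> ('x, 'o) oword \<Rightarrow> bool" where
  "oword ar w \<longleftrightarrow> w \<noteq> [] \<and> (\<forall>p \<in> set w. valid_prm ar p)"

abbreviation bre :: "('x, 'o) oword \<Rightarrow> nat" where
  "bre w \<equiv> length w"

text \<open>Starred words: Omega-words over X \<union> {star}, encoded as 'x option with
  None = star, containing exactly one occurrence of star.\<close>
fun stars_prm :: "('x option, 'o) prm \<Rightarrow> nat" where
  "stars_prm (Var None) = 1"
| "stars_prm (Var (Some x)) = 0"
| "stars_prm (Op d uss) = sum_list (map (\<lambda>us. sum_list (map stars_prm us)) uss)"

definition star_word :: "('o \<Rightarrow> nat) \<Rightarrow> ('x option, 'o) oword \<Rightarrow> bool" where
  "star_word ar u \<longleftrightarrow> oword ar u \<and> sum_list (map stars_prm u) = 1"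

fun subst_prm :: "('x option, 'o) prm \<Rightarrow> ('x, 'o) oword \<Rightarrow> ('x, 'o) oword" where
  "subst_prm (Var None) w = w"
| "subst_prm (Var (Some x)) w = [Var x]"
| "subst_prm (Op d uss) w = [Op d (map (\<lambda>us. concat (map (\<lambda>p. subst_prm p w) us)) uss)]"

definition subst :: "('x option, 'o) oword \<Rightarrow> ('x, 'o) oword \<Rightarrow> ('x, 'o) oword" where
  "subst u w = concat (map (\<lambda>p. subst_prm p w) u)"

type_synonym ('x, 'o, 'k) opoly = "('x, 'o) oword \<Rightarrow>\<^sub>0 'k"

definition opoly :: "('o \<Rightarrow> nat) \<Rightarrow> ('x, 'o, 'k::zero) opoly \<Rightarrow> bool" where
  "opoly ar f \<longleftrightarrow> (\<forall>w \<in> Poly_Mapping.keys f. oword ar w)"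

definition scale :: "'k::comm_ring_1 \<Rightarrow> ('x, 'o, 'k) opoly \<Rightarrow> ('x, 'o, 'k) opoly" where
  "scale c f = (\<Sum>w \<in> Poly_Mapping.keys f. Poly_Mapping.single w (c * Poly_Mapping.lookup f w))"

definition subst_poly :: "('x option, 'o) oword \<Rightarrow> ('x, 'o, 'k::comm_ring_1) opoly \<Rightarrow> ('x, 'o, 'k) opoly" where
  "subst_poly u f = (\<Sum>w \<in> Poly_Mapping.keys f. Poly_Mapping.single (subst u w) (Poly_Mapping.lookup f w))"

definition rmul :: "('x, 'o, 'k::comm_ring_1) opoly \<Rightarrow> ('x, 'o) oword \<Rightarrow> ('x, 'o, 'k) opoly" where
  "rmul f a = (\<Sum>w \<in> Poly_Mapping.keys f. Poly_Mapping.single (w @ a) (Poly_Mapping.lookup f w))"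

definition lmul :: "('x, 'o) oword \<Rightarrow> ('x, 'o, 'k::comm_ring_1) opoly \<Rightarrow> ('x, 'o, 'k) opoly" where
  "lmul b f = (\<Sum>w \<in> Poly_Mapping.keys f. Poly_Mapping.single (b @ w) (Poly_Mapping.lookup f w))"

inductive_set kspan :: "('x, 'o, 'k::comm_ring_1) opoly set \<Rightarrow> ('x, 'o, 'k) opoly set"
  for A where
  zero: "0 \<in> kspan A"
| add: "a \<in> A \<Longrightarrow> p \<in> kspan A \<Longrightarrow> scale c a + p \<in> kspan A"

text \<open>lt v w means v < w (i.e. w > v). A monomial ordering is a well ordering
  on the set of Omega-words compatible with substitution into starred words.\<close>
definition monomial_ordering ::
  "('o \<Rightarrow> nat) \<Rightarrow> (('x, 'o) oword \<Rightarrow> ('x, 'o) oword \<Rightarrow> bool) \<Rightarrow> bool" where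
  "monomial_ordering ar lt \<longleftrightarrow>
     (\<forall>w. oword ar w \<longrightarrow> \<not> lt w w) \<and>
     (\<forall>u v w. oword ar u \<and> oword ar v \<and> oword ar w \<and> lt u v \<and> lt v w \<longrightarrow> lt u w) \<and>
     (\<forall>v w. oword ar v \<and> oword ar w \<longrightarrow> lt v w \<or> v = w \<or> lt w v) \<and>
     wf {(v, w). oword ar v \<and> oword ar w \<and> lt v w} \<and>
     (\<forall>u v w. star_word ar u \<and> oword ar v \<and> oword ar w \<and> lt v w
        \<longrightarrow> lt (subst u v) (subst u w))"

definition lead :: "(('x, 'o) oword \<Rightarrow> ('x, 'o) oword \<Rightarrow> bool) \<Rightarrow> ('x, 'o, 'k::zero) opoly \<Rightarrow> ('x, 'o) oword" where
  "lead lt f = (THE w. w \<in> Poly_Mapping.keys f \<and> (\<forall>v \<in> Poly_Mapping.keys f. v \<noteq> w \<longrightarrow> lt v w))"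

definition monic :: "(('x, 'o) oword \<Rightarrow> ('x, 'o) oword \<Rightarrow> bool) \<Rightarrow> ('x, 'o, 'k::{zero,one}) opoly \<Rightarrow> bool" where
  "monic lt f \<longleftrightarrow> f \<noteq> 0 \<and> Poly_Mapping.lookup f (lead lt f) = 1"

definition Id :: "('o \<Rightarrow> nat) \<Rightarrow> ('x, 'o, 'k::comm_ring_1) opoly set \<Rightarrow> ('x, 'o, 'k) opoly set" where
  "Id ar S = kspan {subst_poly u s | u s. star_word ar u \<and> s \<in> S}"

definition congr_mod ::
  "('o \<Rightarrow> nat) \<Rightarrow> (('x, 'o) oword \<Rightarrow> ('x, 'o) oword \<Rightarrow> bool) \<Rightarrow> ('x, 'o, 'k::comm_ring_1) opoly set
   \<Rightarrow> ('x, 'o) oword \<Rightarrow> ('x, 'o, 'k) opoly \<Rightarrow> ('x, 'o, 'k) opoly \<Rightarrow> bool" where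
  "congr_mod ar lt S w p q \<longleftrightarrow>
     p - q \<in> kspan {subst_poly u s | u s. star_word ar u \<and> s \<in> S \<and> lt (subst u (lead lt s)) w}"

text \<open>Every intersection composition and every including composition of elements of S
  is trivial modulo (S, w).\<close>
definition GSB ::
  "('o \<Rightarrow> nat) \<Rightarrow> (('x, 'o) oword \<Rightarrow> ('x, 'o) oword \<Rightarrow> bool) \<Rightarrow> ('x, 'o, 'k::comm_ring_1) opoly set \<Rightarrow> bool" where
  "GSB ar lt S \<longleftrightarrow>
     (\<forall>f \<in> S. \<forall>g \<in> S.
        (\<forall>w a b. oword ar a \<and> oword ar b \<and> w = lead lt f @ a \<and> w = b @ lead lt g \<and>
                 bre w < bre (lead lt f) + bre (lead lt g)
           \<longrightarrow> congr_mod ar lt S w (rmul f a - lmul b g) 0) \<and>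
        (\<forall>u. star_word ar u \<and> lead lt f = subst u (lead lt g)
           \<longrightarrow> congr_mod ar lt S (lead lt f) (f - subst_poly u g) 0))"

definition Irr ::
  "('o \<Rightarrow> nat) \<Rightarrow> (('x, 'o) oword \<Rightarrow> ('x, 'o) oword \<Rightarrow> bool) \<Rightarrow> ('x, 'o, 'k::comm_ring_1) opoly set
   \<Rightarrow> ('x, 'o) oword set" where
  "Irr ar lt S = {w. oword ar w \<and> (\<forall>u s. star_word ar u \<and> s \<in> S \<longrightarrow> w \<noteq> subst u (lead lt s))}"

end

theory Submission
  imports Defs
begin

(* Throughout, a starred word u is handled as a concrete one-hole context c with u|_w = fill c w,
   and an "S-word" is u|_s for s in S; its leading word is u|_(lead s).

   This yields the key lemma: if S is a GSB, two
   S-words with the same leading word w differ by something trivial mod (S,w) (nested = including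
   composition, overlapping = intersection composition, disjoint = free).  From it, (I) => (II) by
   well-founded induction on the bounding leading word.  (II) => (II') by repeatedly subtracting an
   S-word with the current leading word; (II') => (II) since the first term of an ordered
   representation gives the leading word; (II) => (I) because a composition is the difference of
   two S-words with the same leading word and thus has an ordered representation below it.
   Finally, Irr(S) always spans the quotient (normal forms), and it is independent modulo Id(S)
   exactly when (II) holds. *)

section \<open>Starred words as contexts\<close>

(* One-hole contexts, i.e. starred words u of frak S^star(X) in a concrete recursive form:
   the hole sits either at top level between L and R, or inside the argument A @ [_] @ B of an
   operation symbol d which itself sits between L and R. *)
datatype ('x,'o) ctx = Hole "('x,'o) prm list" "('x,'o) prm list"
  | In "('x,'o) prm list" 'o "('x,'o) prm list list" "('x,'o) ctx" "('x,'o) prm list list" "('x,'o) prm list"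

primrec fill :: "('x,'o) ctx \<Rightarrow> ('x,'o) oword \<Rightarrow> ('x,'o) oword" where
  "fill (Hole L R) w = L @ w @ R"
| "fill (In L d A c B R) w = L @ [Op d (A @ [fill c w] @ B)] @ R"

definition valid_list :: "('o \<Rightarrow> nat) \<Rightarrow> ('x,'o) prm list \<Rightarrow> bool" where
  "valid_list ar L \<longleftrightarrow> (\<forall>p\<in>set L. valid_prm ar p)"

primrec valid_ctx :: "('o \<Rightarrow> nat) \<Rightarrow> ('x,'o) ctx \<Rightarrow> bool" where
  "valid_ctx ar (Hole L R) = (valid_list ar L \<and> valid_list ar R)"
| "valid_ctx ar (In L d A c B R) = (valid_list ar L \<and> valid_list ar R \<and> 1 \<le> ar d \<and> length A + 1 + length B = ar d
     \<and> (\<forall>us\<in>set A \<union> set B. us \<noteq> [] \<and> valid_list ar us) \<and> valid_ctx ar c)"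

primrec ctx_comp :: "('x,'o) ctx \<Rightarrow> ('x,'o) ctx \<Rightarrow> ('x,'o) ctx" where
  "ctx_comp (Hole L R) c' = (case c' of Hole L' R' \<Rightarrow> Hole (L@L') (R'@R)
       | In L' d A c B R' \<Rightarrow> In (L@L') d A c B (R'@R))"
| "ctx_comp (In L d A c B R) c' = In L d A (ctx_comp c c') B R"

lemma fill_ctx_comp[simp]: "fill (ctx_comp c c') w = fill c (fill c' w)"
  by (induction c) (auto split: ctx.split)

declare ctx_comp.simps[simp del]

lemma valid_list_append[simp]: "valid_list ar (xs @ ys) = (valid_list ar xs \<and> valid_list ar ys)"
  by (auto simp: valid_list_def)

lemma valid_ctx_comp: "valid_ctx ar c \<Longrightarrow> valid_ctx ar c' \<Longrightarrow> valid_ctx ar (ctx_comp c c')"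
  by (induction c) (auto split: ctx.split simp: ctx_comp.simps)

lemma oword_iff_valid_list: "oword ar w = (w \<noteq> [] \<and> valid_list ar w)"
  by (simp add: oword_def valid_list_def)

lemma fill_oword: "valid_ctx ar c \<Longrightarrow> oword ar w \<Longrightarrow> oword ar (fill c w)"
  by (induction c) (auto simp: oword_iff_valid_list valid_list_def)

lemma fill_inj: "fill c v = fill c w \<Longrightarrow> v = w"
  by (induction c) auto

lemma concat_single_map: "(\<And>p. p \<in> set xs \<Longrightarrow> f p = [g p]) \<Longrightarrow> concat (map f xs) = map g xs"
  by (induction xs) auto

lemma concat_single: "(\<And>p. p \<in> set xs \<Longrightarrow> f p = [p]) \<Longrightarrow> concat (map f xs) = xs"
  by (induction xs) auto

abbreviation lift :: "('x,'o) prm \<Rightarrow> ('x option,'o) prm" where "lift \<equiv> map_prm Some (\<lambda>a. a)"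

abbreviation unstar :: "('x option,'o) prm \<Rightarrow> ('x,'o) prm" where "unstar \<equiv> map_prm the (\<lambda>a. a)"

lemma subst_lift: "subst_prm (lift p) w = [p]"
proof (induction p)
  case (Var x) then show ?case by simp
next
  case (Op d uss)
  then show ?case by (auto intro!: map_idI concat_single)
qed

lemma stars_lift[simp]: "stars_prm (lift p) = 0"
  by (induction p) (auto intro!: sum_list_eq_0_iff[THEN iffD2])

lemma valid_lift[simp]: "valid_prm ar (lift p) = valid_prm ar p"
  by (induction p) auto

lemma subst_unstar: "stars_prm p = 0 \<Longrightarrow> subst_prm p w = [unstar p]"
proof (induction p)
  case (Var x) then show ?case by (cases x) auto
next
  case (Op d uss)
  then show ?case by (auto intro!: map_cong concat_single_map)
qed

lemma valid_unstar[simp]: "valid_prm ar (unstar p) = valid_prm ar p"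
  by (induction p) auto

lemma subst_append[simp]: "subst (xs @ ys) w = subst xs w @ subst ys w"
  by (simp add: subst_def)

lemma subst_Cons[simp]: "subst (p # ys) w = subst_prm p w @ subst ys w"
  by (simp add: subst_def)

lemma subst_Nil[simp]: "subst [] w = []"
  by (simp add: subst_def)

lemma subst_prm_Op: "subst_prm (Op d uss) w = [Op d (map (\<lambda>us. subst us w) uss)]"
  by (simp add: subst_def)

declare subst_prm.simps(3)[simp del]

declare subst_prm_Op[simp]

lemma subst_unstar_list: "(\<forall>p\<in>set xs. stars_prm p = 0) \<Longrightarrow> subst xs w = map unstar xs"
  by (induction xs) (auto simp: subst_unstar)

lemma subst_lift_list[simp]: "subst (map lift xs) w = xs"
proof (induction xs)
  case (Cons a xs)
  have "subst_prm (lift a) w = [a]" by (rule subst_lift)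
  then show ?case using Cons by simp
qed simp

lemma sum_list_eq_1_split: "sum_list (map f xs) = (1::nat) \<Longrightarrow>
   \<exists>A y B. xs = A @ [y] @ B \<and> f y = 1 \<and> (\<forall>a\<in>set A. f a = 0) \<and> (\<forall>b\<in>set B. f b = 0)"
proof (induction xs)
  case Nil then show ?case by simp
next
  case (Cons x xs)
  show ?case
  proof (cases "f x = 0")
    case True
    then obtain A y B where "xs = A @ [y] @ B \<and> f y = 1 \<and> (\<forall>a\<in>set A. f a = 0) \<and> (\<forall>b\<in>set B. f b = 0)"
      using Cons by auto
    then show ?thesis using True by (intro exI[of _ "x#A"]) auto
  next
    case False
    have "f x + sum_list (map f xs) = 1" using Cons.prems by simp
    then have fx: "f x = 1" "sum_list (map f xs) = 0" using False by linarith+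
    then have xs0: "\<forall>b\<in>set xs. f b = 0" by (simp add: sum_list_eq_0_iff)
    show ?thesis by (rule exI[of _ "[]"], rule exI[of _ x], rule exI[of _ xs]) (use fx xs0 in auto)
  qed
qed

lemma prm_star_ctx: "stars_prm p = 1 \<Longrightarrow> valid_prm ar p \<Longrightarrow> \<exists>c. valid_ctx ar c \<and> (\<forall>w. subst_prm p w = fill c w)"
proof (induction p)
  case (Var x)
  then show ?case by (cases x) (auto intro!: exI[of _ "Hole [] []"] simp: valid_list_def)
next
  case (Op d uss)
  have "sum_list (map (\<lambda>us. sum_list (map stars_prm us)) uss) = 1" using Op.prems by simp
  then obtain A us B where uss: "uss = A @ [us] @ B" and us1: "sum_list (map stars_prm us) = 1"
    and A0: "\<forall>a\<in>set A. sum_list (map stars_prm a) = 0" and B0: "\<forall>a\<in>set B. sum_list (map stars_prm a) = 0"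
    using sum_list_eq_1_split[of "\<lambda>us. sum_list (map stars_prm us)"] by blast
  obtain A' p B' where us: "us = A' @ [p] @ B'" and p1: "stars_prm p = 1"
    and A'0: "\<forall>a\<in>set A'. stars_prm a = 0" and B'0: "\<forall>a\<in>set B'. stars_prm a = 0"
    using sum_list_eq_1_split[OF us1] by blast
  have vus: "us \<noteq> [] \<and> (\<forall>q\<in>set us. valid_prm ar q)" using Op.prems(2) uss by auto
  obtain c where c: "valid_ctx ar c" "\<forall>w. subst_prm p w = fill c w"
    using Op.IH[of us p] p1 vus uss us by auto
  define cc where "cc = In [] d (map (map unstar) A) (ctx_comp (Hole (map unstar A') (map unstar B')) c) (map (map unstar) B) []"
  have "valid_ctx ar cc" unfolding cc_def using Op.prems(2) uss us c(1) vus
    by (auto intro!: valid_ctx_comp simp: valid_list_def; meson Un_iff)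
  moreover have "\<forall>w. subst_prm (Op d uss) w = fill cc w"
  proof
    fix w
    have "subst a w = map unstar a" if "a \<in> set A \<union> set B" for a
      using that A0 B0 by (auto intro!: subst_unstar_list)
    then show "subst_prm (Op d uss) w = fill cc w"
      unfolding cc_def subst_prm_Op using uss us c A'0 B'0
      by (auto simp: subst_unstar_list)
  qed
  ultimately show ?case by blast
qed

lemma star_word_ctx: "star_word ar u \<Longrightarrow> \<exists>c. valid_ctx ar c \<and> subst u = fill c"
proof -
  assume su: "star_word ar u"
  then obtain A p B where u: "u = A @ [p] @ B" and p1: "stars_prm p = 1"
    and A0: "\<forall>a\<in>set A. stars_prm a = 0" and B0: "\<forall>a\<in>set B. stars_prm a = 0"
    using sum_list_eq_1_split[of stars_prm u] by (auto simp: star_word_def)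
  have v: "\<forall>q\<in>set u. valid_prm ar q" using su by (auto simp: star_word_def oword_def)
  obtain c where c: "valid_ctx ar c" "\<forall>w. subst_prm p w = fill c w"
    using prm_star_ctx[OF p1, of ar] v u by auto
  show ?thesis
    using c u v A0 B0
    by (intro exI[of _ "ctx_comp (Hole (map unstar A) (map unstar B)) c"])
       (auto intro!: valid_ctx_comp simp: valid_list_def valid_unstar subst_unstar_list)
qed

lemma ctx_star_word: "valid_ctx ar c \<Longrightarrow> \<exists>u. star_word ar u \<and> subst u = fill c"
proof (induction c)
  case (Hole L R)
  then show ?case
    by (intro exI[of _ "map lift L @ [Var None] @ map lift R"])
       (auto simp: star_word_def oword_def valid_list_def sum_list_eq_0_iff)
next
  case (In L d A c B R)
  then obtain uc where uc: "star_word ar uc" "subst uc = fill c" by auto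
  define u where "u = map lift L @ [Op d (map (map lift) A @ [uc] @ map (map lift) B)] @ map lift R"
  have "star_word ar u" using In.prems uc(1)
    by (auto simp: u_def star_word_def oword_def valid_list_def sum_list_eq_0_iff; meson Un_iff)
  moreover have "subst u = fill (In L d A c B R)"
    using uc(2) by (auto simp: u_def fun_eq_iff comp_def)
  ultimately show ?case by blast
qed

section \<open>Relative position of two occurrences of subwords\<close>

type_synonym ('x,'o) word_map = "('x,'o) oword \<Rightarrow> ('x,'o) oword"

definition is_ctx :: "('o \<Rightarrow> nat) \<Rightarrow> ('x,'o) word_map \<Rightarrow> bool" where
  "is_ctx ar F \<longleftrightarrow> (\<exists>c. valid_ctx ar c \<and> F = fill c)"

definition nested :: "('o \<Rightarrow> nat) \<Rightarrow> ('x,'o) word_map \<Rightarrow> ('x,'o) oword \<Rightarrow> ('x,'o) word_map \<Rightarrow> ('x,'o) oword \<Rightarrow> bool" where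
  "nested ar F1 v1 F2 v2 \<longleftrightarrow> (\<exists>G. is_ctx ar G \<and> v1 = G v2 \<and> (\<forall>y. F2 y = F1 (G y)))"

(* The occurrences overlap at top level: a suffix of v1 is a proper prefix of v2, the situation
   of an intersection composition. *)
definition overlap :: "('o \<Rightarrow> nat) \<Rightarrow> ('x,'o) word_map \<Rightarrow> ('x,'o) oword \<Rightarrow> ('x,'o) word_map \<Rightarrow> ('x,'o) oword \<Rightarrow> bool" where
  "overlap ar F1 v1 F2 v2 \<longleftrightarrow> (\<exists>G a b. is_ctx ar G \<and> oword ar a \<and> oword ar b \<and> v1 @ a = b @ v2
     \<and> length (v1 @ a) < length v1 + length v2 \<and> (\<forall>x. F1 x = G (x @ a)) \<and> (\<forall>y. F2 y = G (b @ y)))"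

definition disjoint :: "('o \<Rightarrow> nat) \<Rightarrow> ('x,'o) word_map \<Rightarrow> ('x,'o) oword \<Rightarrow> ('x,'o) word_map \<Rightarrow> ('x,'o) oword \<Rightarrow> bool" where
  "disjoint ar F1 v1 F2 v2 \<longleftrightarrow> (\<exists>D. (\<forall>x. oword ar x \<longrightarrow> is_ctx ar (D x)) \<and> (\<forall>y. oword ar y \<longrightarrow> is_ctx ar (\<lambda>x. D x y))
     \<and> (\<forall>x. F1 x = D x v2) \<and> (\<forall>y. F2 y = D v1 y))"

definition related :: "('o \<Rightarrow> nat) \<Rightarrow> ('x,'o) word_map \<Rightarrow> ('x,'o) oword \<Rightarrow> ('x,'o) word_map \<Rightarrow> ('x,'o) oword \<Rightarrow> bool" where
  "related ar F1 v1 F2 v2 \<longleftrightarrow> nested ar F1 v1 F2 v2 \<or> nested ar F2 v2 F1 v1 \<or> overlap ar F1 v1 F2 v2 \<or> overlap ar F2 v2 F1 v1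
     \<or> disjoint ar F1 v1 F2 v2"

lemma is_ctx_comp: "is_ctx ar G1 \<Longrightarrow> is_ctx ar G2 \<Longrightarrow> is_ctx ar (G1 \<circ> G2)"
proof -
  assume "is_ctx ar G1" "is_ctx ar G2"
  then obtain c1 c2 where "valid_ctx ar c1" "G1 = fill c1" "valid_ctx ar c2" "G2 = fill c2" unfolding is_ctx_def by blast
  then show ?thesis unfolding is_ctx_def by (intro exI[of _ "ctx_comp c1 c2"]) (auto simp: valid_ctx_comp)
qed

lemma is_ctx_comp': "is_ctx ar G1 \<Longrightarrow> is_ctx ar G2 \<Longrightarrow> is_ctx ar (\<lambda>x. G1 (G2 x))"
  using is_ctx_comp[of ar G1 G2] by (simp add: comp_def)

lemma is_ctx_Hole: "valid_list ar L \<Longrightarrow> valid_list ar R \<Longrightarrow> is_ctx ar (\<lambda>w. L @ w @ R)"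
  unfolding is_ctx_def by (intro exI[of _ "Hole L R"]) auto

lemma is_ctx_In: "valid_ctx ar (In L d A c B R) \<Longrightarrow> is_ctx ar (\<lambda>w. L @ [Op d (A @ [fill c w] @ B)] @ R)"
  unfolding is_ctx_def by (intro exI[of _ "In L d A c B R"]) auto

lemma is_ctx_fill: "valid_ctx ar c \<Longrightarrow> is_ctx ar (fill c)"
  unfolding is_ctx_def by blast

lemma disjoint_sym: "disjoint ar F1 v1 F2 v2 \<Longrightarrow> disjoint ar F2 v2 F1 v1"
proof -
  assume "disjoint ar F1 v1 F2 v2"
  then obtain D where D: "\<forall>x. oword ar x \<longrightarrow> is_ctx ar (D x)" "\<forall>y. oword ar y \<longrightarrow> is_ctx ar (\<lambda>x. D x y)"
     "\<forall>x. F1 x = D x v2" "\<forall>y. F2 y = D v1 y" unfolding disjoint_def by blast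
  show ?thesis unfolding disjoint_def
    by (rule exI[of _ "\<lambda>y x. D x y"]) (use D in simp)
qed

lemma related_sym: "related ar F1 v1 F2 v2 \<Longrightarrow> related ar F2 v2 F1 v1"
  unfolding related_def using disjoint_sym by blast

lemma related_wrap:
  assumes H: "is_ctx ar H" and R: "related ar F1 v1 F2 v2"
  shows "related ar (\<lambda>x. H (F1 x)) v1 (\<lambda>y. H (F2 y)) v2"
proof -
  have n: "nested ar (\<lambda>x. H (F1 x)) v1 (\<lambda>y. H (F2 y)) v2" if "nested ar F1 v1 F2 v2" for F1 v1 F2 v2
    using that unfolding nested_def by auto
  have o: "overlap ar (\<lambda>x. H (F1 x)) v1 (\<lambda>y. H (F2 y)) v2" if ov: "overlap ar F1 v1 F2 v2" for F1 v1 F2 v2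
  proof -
    obtain G a b where G: "is_ctx ar G" "oword ar a" "oword ar b" "v1 @ a = b @ v2"
     "length (v1 @ a) < length v1 + length v2" "\<forall>x. F1 x = G (x @ a)" "\<forall>y. F2 y = G (b @ y)"
      using ov unfolding overlap_def by blast
    have "is_ctx ar (\<lambda>x. H (G x))" using is_ctx_comp'[OF H G(1)] .
    then show ?thesis unfolding overlap_def using G by (intro exI[of _ "\<lambda>x. H (G x)"] exI[of _ a] exI[of _ b]) simp
  qed
  have d: "disjoint ar (\<lambda>x. H (F1 x)) v1 (\<lambda>y. H (F2 y)) v2" if ds: "disjoint ar F1 v1 F2 v2"
  proof -
    obtain D where D: "\<forall>x. oword ar x \<longrightarrow> is_ctx ar (D x)" "\<forall>y. oword ar y \<longrightarrow> is_ctx ar (\<lambda>x. D x y)"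
     "\<forall>x. F1 x = D x v2" "\<forall>y. F2 y = D v1 y" using ds unfolding disjoint_def by blast
    have "\<forall>x. oword ar x \<longrightarrow> is_ctx ar (\<lambda>y. H (D x y))" using D(1) is_ctx_comp'[OF H] by blast
    moreover have "\<forall>y. oword ar y \<longrightarrow> is_ctx ar (\<lambda>x. H (D x y))" using D(2) is_ctx_comp'[OF H] by blast
    ultimately show ?thesis unfolding disjoint_def using D by (intro exI[of _ "\<lambda>x y. H (D x y)"]) simp
  qed
  show ?thesis using R n o d unfolding related_def by blast
qed

lemma append_eq_split: "xs @ ys = us @ vs \<Longrightarrow> length xs \<le> length us \<Longrightarrow> \<exists>m. us = xs @ m \<and> ys = m @ vs"
proof -
  assume a: "xs @ ys = us @ vs" "length xs \<le> length us"
  then have "xs = take (length xs) us \<and> ys = drop (length xs) us @ vs"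
    by (simp add: append_eq_append_conv_if)
  then show ?thesis by (metis append_take_drop_id)
qed

lemma valid_list_Cons[simp]: "valid_list ar (p # xs) = (valid_prm ar p \<and> valid_list ar xs)"
  by (simp add: valid_list_def)

lemma valid_list_Nil[simp]: "valid_list ar []" by (simp add: valid_list_def)

lemma related_Hole_Hole:
  fixes L1 R1 L2 R2 v1 v2 :: "('x,'o) oword"
  assumes v: "valid_list ar L1" "valid_list ar R1" "valid_list ar L2" "valid_list ar R2" "oword ar v1" "oword ar v2"
    and eq: "L1 @ v1 @ R1 = L2 @ v2 @ R2" and le: "length L1 \<le> length L2"
  shows "related ar (\<lambda>x. L1 @ x @ R1) v1 (\<lambda>y. L2 @ y @ R2) v2"
proof -
  obtain M where M: "L2 = L1 @ M" "v1 @ R1 = M @ v2 @ R2" using append_eq_split[OF eq le] by blast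
  have vM: "valid_list ar M" using M v by simp
  have v1: "v1 \<noteq> []" "valid_list ar v1" "v2 \<noteq> []" "valid_list ar v2" using v by (auto simp: oword_iff_valid_list)
  show ?thesis
  proof (cases "length v1 \<le> length M")
    case True
    obtain M' where M': "M = v1 @ M'" "R1 = M' @ v2 @ R2" using append_eq_split[OF M(2) True] by blast
    have vM': "valid_list ar M'" using vM M' by simp
    have "disjoint ar (\<lambda>x. L1 @ x @ R1) v1 (\<lambda>y. L2 @ y @ R2) v2"
      unfolding disjoint_def
    proof (intro exI[of _ "\<lambda>x y. L1 @ x @ M' @ y @ R2"] conjI allI impI)
      fix x :: "('x,'o) oword" assume "oword ar x"
      then show "is_ctx ar (\<lambda>y. L1 @ x @ M' @ y @ R2)"
        using is_ctx_Hole[of ar "L1 @ x @ M'" R2] v vM' by (simp add: oword_iff_valid_list)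
    next
      fix y :: "('x,'o) oword" assume "oword ar y"
      then show "is_ctx ar (\<lambda>x. L1 @ x @ M' @ y @ R2)"
        using is_ctx_Hole[of ar L1 "M' @ y @ R2"] v vM' by (simp add: oword_iff_valid_list)
    qed (use M M' in auto)
    then show ?thesis unfolding related_def by blast
  next
    case False
    then have le2: "length M \<le> length v1" by simp
    obtain N where N: "v1 = M @ N" "v2 @ R2 = N @ R1" using append_eq_split[OF M(2)[symmetric] le2] by blast
    have Nne: "N \<noteq> []" using N False by auto
    have vN: "valid_list ar N" using N v1 by simp
    show ?thesis
    proof (cases "length v2 \<le> length N")
      case True
      obtain N' where N': "N = v2 @ N'" "R2 = N' @ R1" using append_eq_split[OF N(2) True] by blast
      have "nested ar (\<lambda>x. L1 @ x @ R1) v1 (\<lambda>y. L2 @ y @ R2) v2"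
        unfolding nested_def
        by (rule exI[of _ "\<lambda>w. M @ w @ N'"]) (use is_ctx_Hole[of ar M N'] vM vN N' N M in auto)
      then show ?thesis unfolding related_def by blast
    next
      case False
      then have le3: "length N \<le> length v2" by simp
      obtain K where K: "v2 = N @ K" "R1 = K @ R2" using append_eq_split[OF N(2)[symmetric] le3] by blast
      have Kne: "K \<noteq> []" using K False by auto
      have vK: "valid_list ar K" using K v1 by simp
      show ?thesis
      proof (cases "M = []")
        case True
        have "nested ar (\<lambda>y. L2 @ y @ R2) v2 (\<lambda>x. L1 @ x @ R1) v1"
          unfolding nested_def
          by (rule exI[of _ "\<lambda>w. w @ K"]) (use is_ctx_Hole[of ar "[]" K] vK K N M True in auto)
        then show ?thesis unfolding related_def by blast
      next
        case Mne: False
        have "overlap ar (\<lambda>x. L1 @ x @ R1) v1 (\<lambda>y. L2 @ y @ R2) v2"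
          unfolding overlap_def
          by (intro exI[of _ "\<lambda>w. L1 @ w @ R2"] exI[of _ K] exI[of _ M])
             (use is_ctx_Hole[of ar L1 R2] v vK vM Kne Mne K N M Nne in \<open>auto simp: oword_iff_valid_list\<close>)
        then show ?thesis unfolding related_def by blast
      qed
    qed
  qed
qed

lemma valid_ctx_In_prm: "valid_ctx ar (In L d A c B R) \<Longrightarrow> oword ar y \<Longrightarrow> valid_prm ar (Op d (A @ [fill c y] @ B))"
  using fill_oword[of ar "In L d A c B R" y] by (simp add: oword_iff_valid_list)

lemma related_Hole_In:
  fixes L1 R1 L2 R2 v1 v2 :: "('x,'o) oword"
  assumes v: "valid_list ar L1" "valid_list ar R1" "valid_ctx ar (In L2 d A c B R2)" "oword ar v1" "oword ar v2"
    and eq: "L1 @ v1 @ R1 = L2 @ [Op d (A @ [fill c v2] @ B)] @ R2"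
  shows "related ar (\<lambda>x. L1 @ x @ R1) v1 (\<lambda>y. L2 @ [Op d (A @ [fill c y] @ B)] @ R2) v2"
proof -
  define P where "P y = Op d (A @ [fill c y] @ B)" for y
  have eqP: "L1 @ v1 @ R1 = L2 @ [P v2] @ R2" using eq by (simp add: P_def)
  have vP: "valid_prm ar (P y)" if "oword ar y" for y using valid_ctx_In_prm[OF v(3) that] by (simp add: P_def)
  have vv: "valid_list ar L2" "valid_list ar R2" "valid_list ar v1" "v1 \<noteq> []" "valid_list ar v2" "v2 \<noteq> []" using v by (auto simp: oword_iff_valid_list)
  have c3: "valid_ctx ar c" "1 \<le> ar d" "length A + 1 + length B = ar d" "\<forall>us\<in>set A \<union> set B. us \<noteq> [] \<and> valid_list ar us"
    using v(3) by auto
  have "related ar (\<lambda>x. L1 @ x @ R1) v1 (\<lambda>y. L2 @ [P y] @ R2) v2"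
  proof (cases "length L2 < length L1")
    case True
    obtain m where m: "L1 = L2 @ m" "[P v2] @ R2 = m @ v1 @ R1" using append_eq_split[OF eqP[symmetric]] True by fastforce
    then obtain M' where M': "m = P v2 # M'" "R2 = M' @ v1 @ R1" using True by (cases m) auto
    have vM': "valid_list ar M'" using M' vv by simp
    have "disjoint ar (\<lambda>x. L1 @ x @ R1) v1 (\<lambda>y. L2 @ [P y] @ R2) v2"
      unfolding disjoint_def
    proof (intro exI[of _ "\<lambda>x y. L2 @ [P y] @ M' @ x @ R1"] conjI allI impI)
      fix x :: "('x,'o) oword" assume ox: "oword ar x"
      have "valid_ctx ar (In L2 d A c B (M' @ x @ R1))" using v(3) vM' ox v(2) by (auto simp: oword_iff_valid_list)
      from is_ctx_In[OF this] show "is_ctx ar (\<lambda>y. L2 @ [P y] @ M' @ x @ R1)" by (simp add: P_def)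
    next
      fix y :: "('x,'o) oword" assume "oword ar y"
      then show "is_ctx ar (\<lambda>x. L2 @ [P y] @ M' @ x @ R1)"
        using is_ctx_Hole[of ar "L2 @ [P y] @ M'" R1] vv vM' vP v(2) by simp
    qed (use m M' in auto)
    then show ?thesis unfolding related_def by blast
  next
    case False
    then have le: "length L1 \<le> length L2" by simp
    obtain M where M: "L2 = L1 @ M" "v1 @ R1 = M @ [P v2] @ R2" using append_eq_split[OF eqP le] by blast
    have vM: "valid_list ar M" using M vv by simp
    show ?thesis
    proof (cases "length v1 \<le> length M")
      case True
      obtain M' where M': "M = v1 @ M'" "R1 = M' @ [P v2] @ R2" using append_eq_split[OF M(2) True] by blast
      have vM': "valid_list ar M'" using vM M' by simp
      have "disjoint ar (\<lambda>x. L1 @ x @ R1) v1 (\<lambda>y. L2 @ [P y] @ R2) v2"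
        unfolding disjoint_def
      proof (intro exI[of _ "\<lambda>x y. L1 @ x @ M' @ [P y] @ R2"] conjI allI impI)
        fix x :: "('x,'o) oword" assume ox: "oword ar x"
        have "valid_ctx ar (In (L1 @ x @ M') d A c B R2)" using v vM' ox by (auto simp: oword_iff_valid_list)
        from is_ctx_In[OF this] show "is_ctx ar (\<lambda>y. L1 @ x @ M' @ [P y] @ R2)" by (simp add: P_def)
      next
        fix y :: "('x,'o) oword" assume "oword ar y"
        then show "is_ctx ar (\<lambda>x. L1 @ x @ M' @ [P y] @ R2)"
          using is_ctx_Hole[of ar L1 "M' @ [P y] @ R2"] vv vM' vP v(1) by simp
      qed (use M M' in auto)
      then show ?thesis unfolding related_def by blast
    next
      case False
      then have le2: "length M \<le> length v1" by simp
      obtain N where N: "v1 = M @ N" "[P v2] @ R2 = N @ R1" using append_eq_split[OF M(2)[symmetric] le2] by blast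
      then obtain N' where N': "N = P v2 # N'" "R2 = N' @ R1" using False by (cases N) auto
      have vN': "valid_list ar N'" using N N' vv by simp
      have vc: "valid_ctx ar (In M d A c B N')" using v(3) vM vN' by auto
      have "nested ar (\<lambda>x. L1 @ x @ R1) v1 (\<lambda>y. L2 @ [P y] @ R2) v2"
        unfolding nested_def
        by (rule exI[of _ "\<lambda>w. M @ [P w] @ N'"]) (use is_ctx_In[OF vc] M N N' in \<open>auto simp: P_def\<close>)
      then show ?thesis unfolding related_def by blast
    qed
  qed
  then show ?thesis by (simp add: P_def)
qed

lemma disjoint_In_In_diff:
  fixes L1 R1 L2 R2 v1 v2 :: "('x,'o) oword"
  assumes v: "valid_ctx ar (In L1 d1 A1 c1 B1 R1)" "valid_ctx ar (In L2 d2 A2 c2 B2 R2)" "oword ar v1" "oword ar v2"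
    and eq: "L1 @ [Op d1 (A1 @ [fill c1 v1] @ B1)] @ R1 = L2 @ [Op d2 (A2 @ [fill c2 v2] @ B2)] @ R2"
    and lt: "length L1 < length L2"
  shows "disjoint ar (\<lambda>x. L1 @ [Op d1 (A1 @ [fill c1 x] @ B1)] @ R1) v1 (\<lambda>y. L2 @ [Op d2 (A2 @ [fill c2 y] @ B2)] @ R2) v2"
proof -
  define P1 where "P1 x = Op d1 (A1 @ [fill c1 x] @ B1)" for x
  define P2 where "P2 y = Op d2 (A2 @ [fill c2 y] @ B2)" for y
  have eqP: "L1 @ [P1 v1] @ R1 = L2 @ [P2 v2] @ R2" using eq by (simp add: P1_def P2_def)
  have vP1: "valid_prm ar (P1 y)" if "oword ar y" for y using valid_ctx_In_prm[OF v(1) that] by (simp add: P1_def)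
  have vP2: "valid_prm ar (P2 y)" if "oword ar y" for y using valid_ctx_In_prm[OF v(2) that] by (simp add: P2_def)
  obtain m where m: "L2 = L1 @ m" "[P1 v1] @ R1 = m @ [P2 v2] @ R2" using append_eq_split[OF eqP] lt by fastforce
  then obtain M where M: "m = P1 v1 # M" "R1 = M @ [P2 v2] @ R2" using lt by (cases m) auto
  have vM: "valid_list ar M" using M v by simp
  have "disjoint ar (\<lambda>x. L1 @ [P1 x] @ R1) v1 (\<lambda>y. L2 @ [P2 y] @ R2) v2"
    unfolding disjoint_def
  proof (intro exI[of _ "\<lambda>x y. L1 @ [P1 x] @ M @ [P2 y] @ R2"] conjI allI impI)
    fix x :: "('x,'o) oword" assume ox: "oword ar x"
    have "valid_ctx ar (In (L1 @ [P1 x] @ M) d2 A2 c2 B2 R2)" using v vM vP1[OF ox] by auto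
    from is_ctx_In[OF this] show "is_ctx ar (\<lambda>y. L1 @ [P1 x] @ M @ [P2 y] @ R2)" by (simp add: P2_def)
  next
    fix y :: "('x,'o) oword" assume oy: "oword ar y"
    have "valid_ctx ar (In L1 d1 A1 c1 B1 (M @ [P2 y] @ R2))" using v vM vP2[OF oy] by auto
    from is_ctx_In[OF this] show "is_ctx ar (\<lambda>x. L1 @ [P1 x] @ M @ [P2 y] @ R2)" by (simp add: P1_def)
  qed (use m M in auto)
  then show ?thesis by (simp add: P1_def P2_def)
qed

lemma disjoint_In_In_same:
  fixes L R v1 v2 :: "('x,'o) oword"
  assumes v: "valid_ctx ar (In L d A1 c1 B1 R)" "valid_ctx ar (In L d A2 c2 B2 R)" "oword ar v1" "oword ar v2"
    and eq: "A1 @ [fill c1 v1] @ B1 = A2 @ [fill c2 v2] @ B2"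
    and lt: "length A1 < length A2"
  shows "disjoint ar (\<lambda>x. L @ [Op d (A1 @ [fill c1 x] @ B1)] @ R) v1 (\<lambda>y. L @ [Op d (A2 @ [fill c2 y] @ B2)] @ R) v2"
proof -
  obtain m where m: "A2 = A1 @ m" "[fill c1 v1] @ B1 = m @ [fill c2 v2] @ B2" using append_eq_split[OF eq] lt by fastforce
  then obtain M where M: "m = fill c1 v1 # M" "B1 = M @ [fill c2 v2] @ B2" using lt by (cases m) auto
  have ow: "oword ar (fill c1 x)" if "oword ar x" for x using fill_oword[of ar c1 x] v(1) that by simp
  have ow2: "oword ar (fill c2 y)" if "oword ar y" for y using fill_oword[of ar c2 y] v(2) that by simp
  show ?thesis
    unfolding disjoint_def
  proof (intro exI[of _ "\<lambda>x y. L @ [Op d (A1 @ [fill c1 x] @ M @ [fill c2 y] @ B2)] @ R"] conjI allI impI)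
    fix x :: "('x,'o) oword" assume ox: "oword ar x"
    have "valid_ctx ar (In L d (A1 @ [fill c1 x] @ M) c2 B2 R)" using v m M ow[OF ox] by (auto simp: oword_iff_valid_list)
    from is_ctx_In[OF this] show "is_ctx ar (\<lambda>y. L @ [Op d (A1 @ [fill c1 x] @ M @ [fill c2 y] @ B2)] @ R)" by simp
  next
    fix y :: "('x,'o) oword" assume oy: "oword ar y"
    have "valid_ctx ar (In L d A1 c1 (M @ [fill c2 y] @ B2) R)" using v m M ow2[OF oy] by (auto simp: oword_iff_valid_list)
    from is_ctx_In[OF this] show "is_ctx ar (\<lambda>x. L @ [Op d (A1 @ [fill c1 x] @ M @ [fill c2 y] @ B2)] @ R)" by simp
  qed (use m M in auto)
qed

lemma fill_Hole_fun: "fill (Hole L R) = (\<lambda>x. L @ x @ R)" by (simp add: fun_eq_iff)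

lemma fill_In_fun: "fill (In L d A c B R) = (\<lambda>x. L @ [Op d (A @ [fill c x] @ B)] @ R)" by (simp add: fun_eq_iff)

lemma related_In_In:
  assumes v: "valid_ctx ar (In L1 d1 A1 c1 B1 R1)" "valid_ctx ar (In L2 d2 A2 c2 B2 R2)"
      "oword ar v1" "oword ar v2"
    and fill_eq: "fill (In L1 d1 A1 c1 B1 R1) v1 = fill (In L2 d2 A2 c2 B2 R2) v2"
    and inner: "fill c1 v1 = fill c2 v2 \<Longrightarrow> related ar (fill c1) v1 (fill c2) v2"
  shows "related ar (fill (In L1 d1 A1 c1 B1 R1)) v1 (fill (In L2 d2 A2 c2 B2 R2)) v2"
proof -
have eq: "L1 @ [Op d1 (A1 @ [fill c1 v1] @ B1)] @ R1 = L2 @ [Op d2 (A2 @ [fill c2 v2] @ B2)] @ R2"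
  using fill_eq by simp
show ?thesis
proof (cases "length L1 < length L2")
  case True
  then have "disjoint ar (fill (In L1 d1 A1 c1 B1 R1)) v1 (fill (In L2 d2 A2 c2 B2 R2)) v2"
    using disjoint_In_In_diff[OF _ _ _ _ eq] v by (simp add: fill_In_fun)
  then show ?thesis unfolding related_def by blast
next
  case False
  show ?thesis
  proof (cases "length L2 < length L1")
    case True
    then have "disjoint ar (fill (In L2 d2 A2 c2 B2 R2)) v2 (fill (In L1 d1 A1 c1 B1 R1)) v1"
      using disjoint_In_In_diff[OF _ _ _ _ eq[symmetric]] v by (simp add: fill_In_fun)
    then show ?thesis unfolding related_def using disjoint_sym by blast
  next
    case False
    then have "length L1 = length L2" using \<open>\<not> length L1 < length L2\<close> by simp
    then have e1: "L1 = L2" "d1 = d2" "R1 = R2" and e2: "A1 @ [fill c1 v1] @ B1 = A2 @ [fill c2 v2] @ B2"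
      using eq by (auto simp: append_eq_append_conv)
    have vc: "valid_ctx ar (In L1 d1 A1 c1 B1 R1)" "valid_ctx ar (In L1 d1 A2 c2 B2 R1)"
      using v e1 by auto
    show ?thesis
    proof (cases "length A1 < length A2")
      case True
      then have "disjoint ar (fill (In L1 d1 A1 c1 B1 R1)) v1 (fill (In L2 d2 A2 c2 B2 R2)) v2"
        using disjoint_In_In_same[OF vc _ _ e2] v e1 by (simp add: fill_In_fun)
      then show ?thesis unfolding related_def by blast
    next
      case False
      show ?thesis
      proof (cases "length A2 < length A1")
        case True
        then have "disjoint ar (fill (In L2 d2 A2 c2 B2 R2)) v2 (fill (In L1 d1 A1 c1 B1 R1)) v1"
          using disjoint_In_In_same[OF vc(2) vc(1) _ _ e2[symmetric]] v e1 by (simp add: fill_In_fun)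
        then show ?thesis unfolding related_def using disjoint_sym by blast
      next
        case False
        then have "length A1 = length A2" using \<open>\<not> length A1 < length A2\<close> by simp
        then have e3: "A1 = A2" "fill c1 v1 = fill c2 v2" "B1 = B2"
          using e2 by (auto simp: append_eq_append_conv)
        have "related ar (fill c1) v1 (fill c2) v2"
          using inner e3 by simp
        moreover have "is_ctx ar (\<lambda>w. L1 @ [Op d1 (A1 @ [w] @ B1)] @ R1)"
          using is_ctx_In[of ar L1 d1 A1 "Hole [] []" B1 R1] vc(1) by simp
        ultimately have "related ar (\<lambda>x. L1 @ [Op d1 (A1 @ [fill c1 x] @ B1)] @ R1) v1
             (\<lambda>y. L1 @ [Op d1 (A1 @ [fill c2 y] @ B1)] @ R1) v2"
          using related_wrap by fastforce
        then show ?thesis using e1 e3 by (simp add: fill_In_fun)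
      qed
    qed
  qed
qed
qed

(* Induction on the first context; when both holes lie in the
   same argument of the same operation symbol we descend and wrap the result. *)
lemma occurrences_related:
  "valid_ctx ar c1 \<Longrightarrow> valid_ctx ar c2 \<Longrightarrow> oword ar v1 \<Longrightarrow> oword ar v2 \<Longrightarrow> fill c1 v1 = fill c2 v2
   \<Longrightarrow> related ar (fill c1) v1 (fill c2) v2"
proof (induction c1 arbitrary: c2)
  case (Hole L1 R1)
  show ?case
  proof (cases c2)
    case (Hole L2 R2)
    show ?thesis
    proof (cases "length L1 \<le> length L2")
      case True
      then show ?thesis using related_Hole_Hole[of ar L1 R1 L2 R2 v1 v2] Hole.prems \<open>c2 = _\<close> by (simp add: fill_Hole_fun)
    next
      case False
      then show ?thesis using related_Hole_Hole[of ar L2 R2 L1 R1 v2 v1] Hole.prems \<open>c2 = _\<close> related_sym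
        by (simp add: fill_Hole_fun)
    qed
  next
    case (In L2 d A c B R2)
    then show ?thesis using related_Hole_In[of ar L1 R1 L2 d A c B R2 v1 v2] Hole.prems by (simp add: fill_Hole_fun fill_In_fun)
  qed
next
  case (In L1 d1 A1 c1 B1 R1)
  show ?case
  proof (cases c2)
    case (Hole L2 R2)
    then show ?thesis using related_Hole_In[of ar L2 R2 L1 d1 A1 c1 B1 R1 v2 v1] In.prems related_sym
      by (simp add: fill_Hole_fun fill_In_fun)
  next
    case (In L2 d2 A2 c2' B2 R2)
    have "related ar (fill (In L1 d1 A1 c1 B1 R1)) v1 (fill (In L2 d2 A2 c2' B2 R2)) v2"
      by (rule related_In_In) (use In.prems In.IH \<open>c2 = _\<close> in auto)
    then show ?thesis unfolding \<open>c2 = _\<close> .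
  qed
qed

definition wmap :: "(('x,'o) oword \<Rightarrow> ('x,'o) oword) \<Rightarrow> ('x,'o,'k::comm_ring_1) opoly \<Rightarrow> ('x,'o,'k) opoly" where
  "wmap G f = (\<Sum>w\<in>Poly_Mapping.keys f. Poly_Mapping.single (G w) (Poly_Mapping.lookup f w))"

lemma subst_poly_wmap: "subst_poly u f = wmap (subst u) f"
  by (simp add: subst_poly_def wmap_def)

lemma rmul_wmap: "rmul f a = wmap (\<lambda>w. w @ a) f"
  by (simp add: rmul_def wmap_def)

lemma lmul_wmap: "lmul b f = wmap (\<lambda>w. b @ w) f"
  by (simp add: lmul_def wmap_def)

lemma lookup_scale[simp]: "Poly_Mapping.lookup (scale c f) k = c * Poly_Mapping.lookup f k"
  by (auto simp: scale_def lookup_sum lookup_single when_def in_keys_iff)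

lemma scale_add: "scale c (f + g) = scale c f + scale c g"
  by (rule poly_mapping_eqI) (simp add: lookup_add algebra_simps)

lemma scale_add_left: "scale (c + d) f = scale c f + scale d f"
  by (rule poly_mapping_eqI) (simp add: lookup_add algebra_simps)

lemma scale_scale: "scale c (scale d f) = scale (c * d) f"
  by (rule poly_mapping_eqI) (simp add: algebra_simps)

lemma scale_one[simp]: "scale 1 f = f"
  by (rule poly_mapping_eqI) simp

lemma scale_zero[simp]: "scale c 0 = 0"
  by (rule poly_mapping_eqI) simp

lemma scale_zero_left[simp]: "scale 0 f = 0"
  by (rule poly_mapping_eqI) simp

lemma scale_minus1: "scale (-1) f = - f"
  by (rule poly_mapping_eqI) simp

lemma scale_diff: "scale c (f - g) = scale c f - scale c g"
  by (rule poly_mapping_eqI) (simp add: lookup_minus algebra_simps)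

lemma scale_single: "scale c (Poly_Mapping.single k a) = Poly_Mapping.single k (c * a)"
  by (rule poly_mapping_eqI) (simp add: lookup_single when_def)

lemma scale_sum: "scale c (sum h I) = (\<Sum>i\<in>I. scale c (h i))"
  by (induction I rule: infinite_finite_induct) (auto simp: scale_add)

lemma wmap_superset:
  assumes "finite K" "Poly_Mapping.keys f \<subseteq> K"
  shows "wmap G f = (\<Sum>w\<in>K. Poly_Mapping.single (G w) (Poly_Mapping.lookup f w))"
  unfolding wmap_def
  by (rule sum.mono_neutral_left) (use assms in \<open>auto simp: in_keys_iff\<close>)

lemma wmap_add: "wmap G (f + g) = wmap G f + wmap G g"
proof -
  let ?K = "Poly_Mapping.keys f \<union> Poly_Mapping.keys g"
  have "wmap G (f + g) = (\<Sum>w\<in>?K. Poly_Mapping.single (G w) (Poly_Mapping.lookup (f+g) w))"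
    by (rule wmap_superset) (use keys_add[of f g] in auto)
  also have "\<dots> = (\<Sum>w\<in>?K. Poly_Mapping.single (G w) (Poly_Mapping.lookup f w))
     + (\<Sum>w\<in>?K. Poly_Mapping.single (G w) (Poly_Mapping.lookup g w))"
    by (simp add: lookup_add single_add sum.distrib)
  also have "\<dots> = wmap G f + wmap G g"
    by (simp add: wmap_superset[symmetric])
  finally show ?thesis .
qed

lemma wmap_zero[simp]: "wmap G 0 = 0"
  by (simp add: wmap_def)

lemma wmap_scale: "wmap G (scale c f) = scale c (wmap G f)"
proof -
  have "wmap G (scale c f) = (\<Sum>w\<in>Poly_Mapping.keys f. Poly_Mapping.single (G w) (Poly_Mapping.lookup (scale c f) w))"
    by (rule wmap_superset) (auto simp: in_keys_iff)
  then show ?thesis by (simp add: wmap_def scale_sum scale_single)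
qed

lemma wmap_uminus: "wmap G (- f) = - wmap G f"
  using wmap_scale[of G "-1" f] by (simp add: scale_minus1)

lemma wmap_diff: "wmap G (f - g) = wmap G f - wmap G g"
  using wmap_add[of G f "-g"] by (simp add: wmap_uminus)

lemma wmap_sum: "wmap G (sum h I) = (\<Sum>i\<in>I. wmap G (h i))"
  by (induction I rule: infinite_finite_induct) (auto simp: wmap_add)

lemma wmap_single: "wmap G (Poly_Mapping.single v c) = Poly_Mapping.single (G v) c"
  by (simp add: wmap_def)

lemma wmap_comp: "wmap G1 (wmap G2 f) = wmap (G1 \<circ> G2) f"
proof -
  have "wmap G1 (wmap G2 f) = (\<Sum>w\<in>Poly_Mapping.keys f. wmap G1 (Poly_Mapping.single (G2 w) (Poly_Mapping.lookup f w)))"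
    by (simp only: wmap_def[of G2] wmap_sum)
  also have "\<dots> = (\<Sum>w\<in>Poly_Mapping.keys f. Poly_Mapping.single (G1 (G2 w)) (Poly_Mapping.lookup f w))"
    by (simp only: wmap_single)
  finally show ?thesis by (simp add: wmap_def)
qed

lemma lookup_wmap_inj:
  assumes "inj G"
  shows "Poly_Mapping.lookup (wmap G f) (G w) = Poly_Mapping.lookup f w"
proof -
  have "Poly_Mapping.lookup (wmap G f) (G w) = (\<Sum>v\<in>Poly_Mapping.keys f. (Poly_Mapping.lookup f v when v = w))"
    unfolding wmap_def lookup_sum lookup_single using assms
    by (intro sum.cong) (auto simp: when_def inj_eq)
  also have "\<dots> = Poly_Mapping.lookup f w"
    by (auto simp: when_def in_keys_iff)
  finally show ?thesis .
qed

lemma keys_wmap_subset: "Poly_Mapping.keys (wmap G f) \<subseteq> G ` Poly_Mapping.keys f"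
proof
  fix k assume "k \<in> Poly_Mapping.keys (wmap G f)"
  then have "(\<Sum>v\<in>Poly_Mapping.keys f. (Poly_Mapping.lookup f v when G v = k)) \<noteq> 0"
    by (simp add: wmap_def lookup_sum lookup_single in_keys_iff)
  then obtain v where "v \<in> Poly_Mapping.keys f" "G v = k"
    by (metis (mono_tags, lifting) sum.neutral when_def)
  then show "k \<in> G ` Poly_Mapping.keys f" by blast
qed

lemma keys_wmap_inj: "inj G \<Longrightarrow> Poly_Mapping.keys (wmap G f) = G ` Poly_Mapping.keys f"
  using keys_wmap_subset[of G f] by (auto simp: in_keys_iff lookup_wmap_inj)

lemma kspan_add: "p \<in> kspan A \<Longrightarrow> q \<in> kspan A \<Longrightarrow> p + q \<in> kspan A"
  by (induction p rule: kspan.induct) (auto simp: add.assoc intro: kspan.add)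

lemma kspan_scale: "p \<in> kspan A \<Longrightarrow> scale c p \<in> kspan A"
  by (induction p rule: kspan.induct) (auto simp: scale_add scale_scale intro: kspan.add kspan.zero)

lemma kspan_gen: "a \<in> A \<Longrightarrow> a \<in> kspan A"
  using kspan.add[OF _ kspan.zero, of a A 1] by simp

lemma kspan_uminus: "p \<in> kspan A \<Longrightarrow> - p \<in> kspan A"
  using kspan_scale[of p A "-1"] by (simp add: scale_minus1)

lemma kspan_diff: "p \<in> kspan A \<Longrightarrow> q \<in> kspan A \<Longrightarrow> p - q \<in> kspan A"
  using kspan_add[of p A "-q"] kspan_uminus[of q A] by simp

lemma kspan_mono: "p \<in> kspan A \<Longrightarrow> A \<subseteq> B \<Longrightarrow> p \<in> kspan B"
  by (induction p rule: kspan.induct) (auto intro: kspan.add kspan.zero)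

lemma kspan_sum: "(\<And>i. i \<in> I \<Longrightarrow> h i \<in> kspan A) \<Longrightarrow> sum h I \<in> kspan A"
  by (induction I rule: infinite_finite_induct) (auto intro: kspan_add kspan.zero)

lemma kspan_sgen: "a \<in> A \<Longrightarrow> scale c a \<in> kspan A"
  by (intro kspan_scale kspan_gen)

lemma kspan_wmap: "p \<in> kspan A \<Longrightarrow> (\<And>a. a \<in> A \<Longrightarrow> wmap G a \<in> kspan B) \<Longrightarrow> wmap G p \<in> kspan B"
  by (induction p rule: kspan.induct) (auto simp: wmap_add wmap_scale intro: kspan_add kspan_scale kspan.zero)

lemma kspan_finite: "p \<in> kspan A \<Longrightarrow> \<exists>B. B \<subseteq> A \<and> finite B \<and> p \<in> kspan B"
proof (induction p rule: kspan.induct)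
  case zero then show ?case by (auto intro: kspan.zero)
next
  case (add a p c)
  then obtain B where "B \<subseteq> A" "finite B" "p \<in> kspan B" by auto
  then show ?case using add
    by (intro exI[of _ "insert a B"]) (auto intro: kspan.add kspan_mono[of _ B "insert a B"])
qed

lemma keys_scale_sub: "Poly_Mapping.keys (scale c f) \<subseteq> Poly_Mapping.keys f"
  by (auto simp: in_keys_iff)

lemma kspan_keys: "p \<in> kspan A \<Longrightarrow> (\<And>a k. a \<in> A \<Longrightarrow> k \<in> Poly_Mapping.keys a \<Longrightarrow> P k) \<Longrightarrow> k \<in> Poly_Mapping.keys p \<Longrightarrow> P k"
proof (induction p arbitrary: k rule: kspan.induct)
  case zero then show ?case by simp
next
  case (add a p c)
  then show ?case using keys_add[of "scale c a" p] keys_scale_sub[of c a] by blast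
qed

lemma kspan_empty: "p \<in> kspan {} \<Longrightarrow> p = 0"
  by (induction p rule: kspan.induct) auto

lemma wmap_id: "wmap (\<lambda>w. w) f = f"
proof (rule poly_mapping_eqI)
  fix k
  show "Poly_Mapping.lookup (wmap (\<lambda>w. w) f) k = Poly_Mapping.lookup f k"
    unfolding wmap_def lookup_sum lookup_single
    by (cases "k \<in> Poly_Mapping.keys f") (auto simp: when_def in_keys_iff)
qed

lemma keys_diff: "Poly_Mapping.keys (f - g) \<subseteq> Poly_Mapping.keys f \<union> Poly_Mapping.keys g"
  by (auto simp: in_keys_iff lookup_minus)

locale monomial_order =
  fixes ar :: "'o \<Rightarrow> nat" and lt :: "('x,'o) oword \<Rightarrow> ('x,'o) oword \<Rightarrow> bool"
  assumes mo: "monomial_ordering ar lt"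
begin

lemmas mo_axioms = mo[unfolded monomial_ordering_def]

lemma lt_irrefl: "oword ar w \<Longrightarrow> \<not> lt w w"
  using mo_axioms by blast

lemma lt_trans: "oword ar u \<Longrightarrow> oword ar v \<Longrightarrow> oword ar w \<Longrightarrow> lt u v \<Longrightarrow> lt v w \<Longrightarrow> lt u w"
  using mo_axioms by blast

lemma lt_total: "oword ar v \<Longrightarrow> oword ar w \<Longrightarrow> lt v w \<or> v = w \<or> lt w v"
  using mo_axioms by blast

lemma lt_wf: "wf {(v, w). oword ar v \<and> oword ar w \<and> lt v w}"
  using mo_axioms by blast

lemma star_mono: "star_word ar u \<Longrightarrow> oword ar v \<Longrightarrow> oword ar w \<Longrightarrow> lt v w \<Longrightarrow> lt (subst u v) (subst u w)"
  using mo_axioms by blast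

lemma lt_asym: "oword ar v \<Longrightarrow> oword ar w \<Longrightarrow> lt v w \<Longrightarrow> \<not> lt w v"
  using lt_trans[of v w v] lt_irrefl[of v] by blast

lemma ctx_mono: "valid_ctx ar c \<Longrightarrow> oword ar v \<Longrightarrow> oword ar w \<Longrightarrow> lt v w \<Longrightarrow> lt (fill c v) (fill c w)"
proof -
  assume a: "valid_ctx ar c" "oword ar v" "oword ar w" "lt v w"
  obtain u where "star_word ar u" "subst u = fill c" using ctx_star_word[OF a(1)] by blast
  then show ?thesis using star_mono[of u v w] a by metis
qed

lemma oword_induct:
  assumes "oword ar W" "\<And>W. oword ar W \<Longrightarrow> (\<And>V. oword ar V \<Longrightarrow> lt V W \<Longrightarrow> P V) \<Longrightarrow> P W"
  shows "P W"
proof -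
  have "oword ar W \<longrightarrow> P W"
  proof (rule wf_induct[OF lt_wf, of "\<lambda>W. oword ar W \<longrightarrow> P W"], rule impI)
    fix x assume ih: "\<forall>y. (y, x) \<in> {(v, w). oword ar v \<and> oword ar w \<and> lt v w} \<longrightarrow> oword ar y \<longrightarrow> P y"
      and ox: "oword ar x"
    show "P x" by (rule assms(2)[OF ox]) (use ih ox in blast)
  qed
  then show ?thesis using assms(1) by blast
qed

lemma lead_eqI:
  assumes "opoly ar f" "k \<in> Poly_Mapping.keys f" "\<forall>v\<in>Poly_Mapping.keys f. v \<noteq> k \<longrightarrow> lt v k"
  shows "lead lt f = k"
  unfolding lead_def
proof (rule the_equality)
  show "k \<in> Poly_Mapping.keys f \<and> (\<forall>v\<in>Poly_Mapping.keys f. v \<noteq> k \<longrightarrow> lt v k)" using assms by blast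
next
  fix w assume w: "w \<in> Poly_Mapping.keys f \<and> (\<forall>v\<in>Poly_Mapping.keys f. v \<noteq> w \<longrightarrow> lt v w)"
  show "w = k"
  proof (rule ccontr)
    assume "w \<noteq> k"
    then have "lt w k" "lt k w" using w assms by auto
    moreover have "oword ar w" "oword ar k" using assms w by (auto simp: opoly_def)
    ultimately show False using lt_asym by blast
  qed
qed

lemma finite_max_exists: "finite K \<Longrightarrow> K \<noteq> {} \<Longrightarrow> (\<forall>k\<in>K. oword ar k) \<Longrightarrow> \<exists>m\<in>K. \<forall>v\<in>K. v \<noteq> m \<longrightarrow> lt v m"
proof (induction K rule: finite_ne_induct)
  case (singleton x) then show ?case by auto
next
  case (insert x F)
  then obtain m where m: "m \<in> F" "\<forall>v\<in>F. v \<noteq> m \<longrightarrow> lt v m" by auto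
  have ow: "oword ar x" "oword ar m" using insert m by auto
  show ?case
  proof (cases "lt x m")
    case True then show ?thesis using m by auto
  next
    case False
    then have "lt m x" using lt_total[OF ow] insert m by auto
    have "\<forall>v\<in>insert x F. v \<noteq> x \<longrightarrow> lt v x"
    proof (intro ballI impI)
      fix v assume v: "v \<in> insert x F" "v \<noteq> x"
      then have vF: "v \<in> F" by simp
      show "lt v x"
      proof (cases "v = m")
        case True then show ?thesis using \<open>lt m x\<close> by simp
      next
        case False
        then have "lt v m" using m vF by blast
        moreover have "oword ar v" using vF insert.prems by blast
        ultimately show ?thesis using lt_trans[of v m x] ow \<open>lt m x\<close> by blast
      qed
    qed
    then show ?thesis by blast
  qed
qed

lemma lead_in_keys_and_max:
  assumes "opoly ar f" "f \<noteq> 0"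
  shows "lead lt f \<in> Poly_Mapping.keys f \<and> (\<forall>v\<in>Poly_Mapping.keys f. v \<noteq> lead lt f \<longrightarrow> lt v (lead lt f))"
proof -
  have "Poly_Mapping.keys f \<noteq> {}" using assms(2) by (metis keys_eq_empty)
  then obtain m where m: "m \<in> Poly_Mapping.keys f" "\<forall>v\<in>Poly_Mapping.keys f. v \<noteq> m \<longrightarrow> lt v m"
    using finite_max_exists[of "Poly_Mapping.keys f"] assms(1) by (auto simp: opoly_def)
  then have "lead lt f = m" using lead_eqI assms by blast
  then show ?thesis using m by auto
qed

lemma lead_in_keys: "opoly ar f \<Longrightarrow> f \<noteq> 0 \<Longrightarrow> lead lt f \<in> Poly_Mapping.keys f"
  using lead_in_keys_and_max by blast

lemma key_lt_lead:
  "opoly ar f \<Longrightarrow> f \<noteq> 0 \<Longrightarrow> v \<in> Poly_Mapping.keys f \<Longrightarrow> v \<noteq> lead lt f \<Longrightarrow> lt v (lead lt f)"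
  using lead_in_keys_and_max by blast

lemma lead_oword: "opoly ar f \<Longrightarrow> f \<noteq> 0 \<Longrightarrow> oword ar (lead lt f)"
  using lead_in_keys by (auto simp: opoly_def)

end

locale monic_set = monomial_order ar lt for ar :: "'o \<Rightarrow> nat" and lt :: "('x,'o) oword \<Rightarrow> ('x,'o) oword \<Rightarrow> bool" +
  fixes S :: "('x,'o,'k::comm_ring_1) opoly set"
  assumes Sp: "\<forall>s\<in>S. opoly ar s \<and> monic lt s"
begin

lemma S_opoly: "s \<in> S \<Longrightarrow> opoly ar s" using Sp by auto

lemma S_nz: "s \<in> S \<Longrightarrow> s \<noteq> 0" using Sp by (auto simp: monic_def)

lemma S_lc: "s \<in> S \<Longrightarrow> Poly_Mapping.lookup s (lead lt s) = 1" using Sp by (auto simp: monic_def)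

lemma S_lead: "s \<in> S \<Longrightarrow> oword ar (lead lt s)" using lead_oword S_opoly S_nz by blast

lemma S_keys: "s \<in> S \<Longrightarrow> k \<in> Poly_Mapping.keys s \<Longrightarrow> k \<noteq> lead lt s \<Longrightarrow> lt k (lead lt s)"
  using key_lt_lead S_opoly S_nz by blast

lemma S_keys_ow: "s \<in> S \<Longrightarrow> k \<in> Poly_Mapping.keys s \<Longrightarrow> oword ar k"
  using S_opoly by (auto simp: opoly_def)

lemma inj_fill: "inj (fill c)"
  by (auto intro: injI fill_inj)

lemma Sword_keys: "Poly_Mapping.keys (wmap (fill c) s) = fill c ` Poly_Mapping.keys s"
  by (rule keys_wmap_inj[OF inj_fill])

lemma Sword_lookup: "Poly_Mapping.lookup (wmap (fill c) s) (fill c w) = Poly_Mapping.lookup s w"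
  by (rule lookup_wmap_inj[OF inj_fill])

lemma Sword_opoly: "valid_ctx ar c \<Longrightarrow> s \<in> S \<Longrightarrow> opoly ar (wmap (fill c) s)"
  by (auto simp: opoly_def Sword_keys intro: fill_oword S_keys_ow)

lemma Sword_lc: "s \<in> S \<Longrightarrow> Poly_Mapping.lookup (wmap (fill c) s) (fill c (lead lt s)) = 1"
  by (simp add: Sword_lookup S_lc)

lemma Sword_keys_lt: "valid_ctx ar c \<Longrightarrow> s \<in> S \<Longrightarrow> k \<in> Poly_Mapping.keys (wmap (fill c) s) \<Longrightarrow>
   k \<noteq> fill c (lead lt s) \<Longrightarrow> lt k (fill c (lead lt s))"
proof -
  assume a: "valid_ctx ar c" "s \<in> S" "k \<in> Poly_Mapping.keys (wmap (fill c) s)" "k \<noteq> fill c (lead lt s)"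
  then obtain k' where k': "k' \<in> Poly_Mapping.keys s" "k = fill c k'" by (auto simp: Sword_keys)
  then have "k' \<noteq> lead lt s" using a by blast
  then have "lt k' (lead lt s)" using S_keys a k' by blast
  then show ?thesis using ctx_mono[OF a(1) S_keys_ow[OF a(2) k'(1)] S_lead[OF a(2)]] k' by simp
qed

lemma S_lead_key: "s \<in> S \<Longrightarrow> lead lt s \<in> Poly_Mapping.keys s"
  using lead_in_keys S_opoly S_nz by blast

lemma Sword_lead: "valid_ctx ar c \<Longrightarrow> s \<in> S \<Longrightarrow> lead lt (wmap (fill c) s) = fill c (lead lt s)"
proof (rule lead_eqI)
  assume a: "valid_ctx ar c" "s \<in> S"
  show "opoly ar (wmap (fill c) s)" using Sword_opoly a by blast
  show "fill c (lead lt s) \<in> Poly_Mapping.keys (wmap (fill c) s)"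
    using S_lead_key[OF a(2)] by (simp add: Sword_keys)
  show "\<forall>v\<in>Poly_Mapping.keys (wmap (fill c) s). v \<noteq> fill c (lead lt s) \<longrightarrow> lt v (fill c (lead lt s))"
    using Sword_keys_lt a by blast
qed

definition Swords :: "(('x,'o) oword \<Rightarrow> bool) \<Rightarrow> ('x,'o,'k) opoly set" where
  "Swords P = {wmap (fill c) s | c s. valid_ctx ar c \<and> s \<in> S \<and> P (fill c (lead lt s))}"

lemma Swords_eq: "{subst_poly u s | u s. star_word ar u \<and> s \<in> S \<and> P (subst u (lead lt s))} = Swords P"
proof (rule set_eqI, rule iffI)
  fix g assume "g \<in> {subst_poly u s | u s. star_word ar u \<and> s \<in> S \<and> P (subst u (lead lt s))}"
  then obtain u s where us: "g = subst_poly u s" "star_word ar u" "s \<in> S" "P (subst u (lead lt s))" by blast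
  obtain c where c: "valid_ctx ar c" "subst u = fill c" using star_word_ctx[OF us(2)] by blast
  show "g \<in> Swords P" unfolding Swords_def using us c by (auto simp: subst_poly_wmap)
next
  fix g assume "g \<in> Swords P"
  then obtain c s where cs: "g = wmap (fill c) s" "valid_ctx ar c" "s \<in> S" "P (fill c (lead lt s))"
    unfolding Swords_def by blast
  obtain u where u: "star_word ar u" "subst u = fill c" using ctx_star_word[OF cs(2)] by blast
  have "g = subst_poly u s \<and> star_word ar u \<and> s \<in> S \<and> P (subst u (lead lt s))"
    using cs u by (simp add: subst_poly_wmap)
  then show "g \<in> {subst_poly u s | u s. star_word ar u \<and> s \<in> S \<and> P (subst u (lead lt s))}"
    by blast
qed

lemma Swords_eq': "{subst_poly u s | u s. star_word ar u \<and> s \<in> S} = Swords (\<lambda>_. True)"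
  using Swords_eq[of "\<lambda>_. True"] by simp

lemma Id_eq_span: "Id ar S = kspan (Swords (\<lambda>_. True))"
  unfolding Id_def Swords_eq' ..

lemma congr_mod_iff: "congr_mod ar lt S w p q \<longleftrightarrow> p - q \<in> kspan (Swords (\<lambda>k. lt k w))"
  using Swords_eq[of "\<lambda>k. lt k w"] by (simp add: congr_mod_def)

lemma Swords_props: "g \<in> Swords P \<Longrightarrow> opoly ar g \<and> g \<noteq> 0 \<and> P (lead lt g) \<and> Poly_Mapping.lookup g (lead lt g) = 1
   \<and> (\<forall>k\<in>Poly_Mapping.keys g. k \<noteq> lead lt g \<longrightarrow> lt k (lead lt g))"
proof -
  assume "g \<in> Swords P"
  then obtain c s where cs: "valid_ctx ar c" "s \<in> S" "P (fill c (lead lt s))" "g = wmap (fill c) s"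
    unfolding Swords_def by blast
  have l: "lead lt g = fill c (lead lt s)" using cs Sword_lead by simp
  have lc: "Poly_Mapping.lookup g (lead lt g) = 1" using l cs Sword_lc by simp
  have "g \<noteq> 0" using lc by auto
  then show ?thesis using cs l lc Sword_opoly Sword_keys_lt by auto
qed

abbreviation span_below :: "('x,'o) oword \<Rightarrow> ('x,'o,'k) opoly set" where "span_below w \<equiv> kspan (Swords (\<lambda>k. lt k w))"

abbreviation le_word :: "('x,'o) oword \<Rightarrow> ('x,'o) oword \<Rightarrow> bool" where "le_word W \<equiv> (\<lambda>k. k = W \<or> lt k W)"

lemma SwordsI: "is_ctx ar G \<Longrightarrow> s \<in> S \<Longrightarrow> P (G (lead lt s)) \<Longrightarrow> wmap G s \<in> Swords P"
  unfolding is_ctx_def Swords_def by blast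

lemma Swords_lead: "b \<in> Swords P \<Longrightarrow> \<exists>c s. valid_ctx ar c \<and> s \<in> S \<and> b = wmap (fill c) s \<and> lead lt b = fill c (lead lt s) \<and> P (lead lt b)"
  unfolding Swords_def using Sword_lead by fastforce

lemma Swords_change: "b \<in> Swords P \<Longrightarrow> Q (lead lt b) \<Longrightarrow> b \<in> Swords Q"
proof -
  assume a: "b \<in> Swords P" "Q (lead lt b)"
  then obtain c s where "valid_ctx ar c" "s \<in> S" "b = wmap (fill c) s" "lead lt b = fill c (lead lt s)"
    using Swords_lead by blast
  then show ?thesis unfolding Swords_def using a(2) by auto
qed

lemma Swords_keys: "b \<in> Swords P \<Longrightarrow> k \<in> Poly_Mapping.keys b \<Longrightarrow> oword ar k \<and> (k = lead lt b \<or> lt k (lead lt b))"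
proof -
  assume a: "b \<in> Swords P" "k \<in> Poly_Mapping.keys b"
  have "opoly ar b" "\<forall>k\<in>Poly_Mapping.keys b. k \<noteq> lead lt b \<longrightarrow> lt k (lead lt b)"
    using Swords_props[OF a(1)] by blast+
  then show ?thesis using a(2) unfolding opoly_def by blast
qed

lemma Swords_lead_oword: "b \<in> Swords P \<Longrightarrow> oword ar (lead lt b)"
proof -
  assume a: "b \<in> Swords P"
  have "opoly ar b" "b \<noteq> 0" using Swords_props[OF a] by blast+
  then show ?thesis by (rule lead_oword)
qed

lemma Swords_lead_prop: "b \<in> Swords P \<Longrightarrow> P (lead lt b)"
  using Swords_props by blast

lemma Swords_lc: "b \<in> Swords P \<Longrightarrow> Poly_Mapping.lookup b (lead lt b) = 1"
  using Swords_props by blast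

lemma span_opoly: "p \<in> kspan (Swords P) \<Longrightarrow> opoly ar p"
  unfolding opoly_def using kspan_keys[of p "Swords P" "oword ar"] Swords_keys by blast

lemma span_le_keys:
  assumes p: "p \<in> kspan (Swords (le_word W))" and W: "oword ar W" and k: "k \<in> Poly_Mapping.keys p"
  shows "k = W \<or> lt k W"
proof (rule kspan_keys[OF p _ k])
  fix a k assume a: "a \<in> Swords (le_word W)" "k \<in> Poly_Mapping.keys a"
  have l: "lead lt a = W \<or> lt (lead lt a) W" using Swords_props[OF a(1)] by blast
  have ol: "oword ar (lead lt a)" using Swords_props[OF a(1)] lead_oword by blast
  from Swords_keys[OF a] have "oword ar k" "k = lead lt a \<or> lt k (lead lt a)" by auto
  then show "k = W \<or> lt k W" using l lt_trans[of k "lead lt a" W] ol W by blast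
qed

lemma span_below_keys:
  assumes p: "p \<in> span_below W" and W: "oword ar W" and k: "k \<in> Poly_Mapping.keys p"
  shows "lt k W"
proof (rule kspan_keys[OF p _ k])
  fix a k assume a: "a \<in> Swords (\<lambda>k. lt k W)" "k \<in> Poly_Mapping.keys a"
  have l: "lt (lead lt a) W" using Swords_props[OF a(1)] by blast
  have ol: "oword ar (lead lt a)" using Swords_props[OF a(1)] lead_oword by blast
  from Swords_keys[OF a] have "oword ar k" "k = lead lt a \<or> lt k (lead lt a)" by auto
  then show "lt k W" using l lt_trans[of k "lead lt a" W] ol W by blast
qed

lemma subst_poly_Sword:
  assumes u: "star_word ar u" and s: "s \<in> S"
  shows "subst_poly u s \<in> Swords (\<lambda>k. k = subst u (lead lt s))" "oword ar (subst u (lead lt s))"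
proof -
  obtain c where c: "valid_ctx ar c" "subst u = fill c" using star_word_ctx[OF u] by blast
  show "subst_poly u s \<in> Swords (\<lambda>k. k = subst u (lead lt s))"
    using SwordsI[OF is_ctx_fill[OF c(1)] s, of "\<lambda>k. k = subst u (lead lt s)"] c(2)
    by (simp add: subst_poly_wmap)
  show "oword ar (subst u (lead lt s))" using fill_oword[OF c(1) S_lead[OF s]] c(2) by simp
qed

lemma Swords_Id: "g \<in> Swords P \<Longrightarrow> g \<in> Id ar S"
  unfolding Id_eq_span using Swords_change[of g P "\<lambda>_. True"] kspan_gen by blast

lemma lead_lt_of_vanishing:
  assumes h: "opoly ar h" "h \<noteq> 0" and w: "oword ar w"
    and kb: "\<forall>k\<in>Poly_Mapping.keys h. k = w \<or> lt k w" and l0: "Poly_Mapping.lookup h w = 0"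
  shows "lt (lead lt h) w"
proof -
  have "lead lt h \<in> Poly_Mapping.keys h" using lead_in_keys[OF h] .
  moreover then have "lead lt h \<noteq> w" using l0 by (auto simp: in_keys_iff)
  ultimately show ?thesis using kb by blast
qed

lemma Id_opoly: "f \<in> Id ar S \<Longrightarrow> opoly ar f"
  unfolding Id_eq_span by (rule span_opoly)

lemma Id_diff_scale: "h \<in> Id ar S \<Longrightarrow> t \<in> Swords P \<Longrightarrow> h - scale c t \<in> Id ar S"
  using kspan_diff[of h "Swords (\<lambda>_. True)" "scale c t"] kspan_sgen Swords_change[of t P "\<lambda>_. True"]
  unfolding Id_eq_span by blast

section \<open>Compositions and the key lemma\<close>

lemma wmap_span_below:
  assumes c: "valid_ctx ar c" and w': "oword ar w'" and h: "h \<in> span_below w'"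
  shows "wmap (fill c) h \<in> span_below (fill c w')"
proof (rule kspan_wmap[OF h])
  fix a assume "a \<in> Swords (\<lambda>k. lt k w')"
  then obtain c' s where cs: "a = wmap (fill c') s" "valid_ctx ar c'" "s \<in> S" "lt (fill c' (lead lt s)) w'"
    unfolding Swords_def by blast
  have "wmap (fill c) a = wmap (fill (ctx_comp c c')) s"
  proof -
    have "fill (ctx_comp c c') = (\<lambda>x. fill c (fill c' x))" by (simp add: fun_eq_iff)
    then show ?thesis using cs(1) by (simp add: wmap_comp comp_def)
  qed
  moreover have "lt (fill (ctx_comp c c') (lead lt s)) (fill c w')"
    using ctx_mono[OF c _ w' cs(4)] fill_oword[OF cs(2) S_lead[OF cs(3)]] by simp
  ultimately have "wmap (fill c) a \<in> Swords (\<lambda>k. lt k (fill c w'))"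
    using SwordsI[OF is_ctx_fill[OF valid_ctx_comp[OF c cs(2)]] cs(3)] by simp
  then show "wmap (fill c) a \<in> span_below (fill c w')" by (rule kspan_gen)
qed

(* Nested case: this is an including composition, trivial by the GSB hypothesis. *)
lemma nested_diff_below:
  assumes gsb: "GSB ar lt S" and c: "valid_ctx ar c1" "valid_ctx ar c2" and s: "s1 \<in> S" "s2 \<in> S"
    and n: "nested ar (fill c1) (lead lt s1) (fill c2) (lead lt s2)"
  shows "wmap (fill c1) s1 - wmap (fill c2) s2 \<in> span_below (fill c1 (lead lt s1))"
proof -
  obtain G where G: "is_ctx ar G" "lead lt s1 = G (lead lt s2)" "\<forall>y. fill c2 y = fill c1 (G y)"
    using n unfolding nested_def by blast
  obtain c where cG: "valid_ctx ar c" "G = fill c" using G(1) unfolding is_ctx_def by blast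
  obtain u where u: "star_word ar u" "subst u = fill c" using ctx_star_word[OF cG(1)] by blast
  have l: "lead lt s1 = subst u (lead lt s2)" using G(2) cG u(2) by simp
  have "\<forall>u. star_word ar u \<and> lead lt s1 = subst u (lead lt s2) \<longrightarrow> congr_mod ar lt S (lead lt s1) (s1 - subst_poly u s2) 0"
    using gsb s unfolding GSB_def by blast
  then have "congr_mod ar lt S (lead lt s1) (s1 - subst_poly u s2) 0"
    using u(1) l by blast
  then have "s1 - wmap (fill c) s2 \<in> span_below (lead lt s1)"
    by (simp add: congr_mod_iff subst_poly_wmap u(2))
  from wmap_span_below[OF c(1) S_lead[OF s(1)] this]
  have "wmap (fill c1) s1 - wmap (fill c1 \<circ> fill c) s2 \<in> span_below (fill c1 (lead lt s1))"
    by (simp add: wmap_diff wmap_comp)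
  moreover have "fill c1 \<circ> fill c = fill c2" using G(3) cG by (simp add: fun_eq_iff)
  ultimately show ?thesis by simp
qed

(* Overlapping case: this is an intersection composition, trivial by the GSB hypothesis. *)
lemma overlap_diff_below:
  assumes gsb: "GSB ar lt S" and c: "valid_ctx ar c1" "valid_ctx ar c2" and s: "s1 \<in> S" "s2 \<in> S"
    and o: "overlap ar (fill c1) (lead lt s1) (fill c2) (lead lt s2)"
  shows "wmap (fill c1) s1 - wmap (fill c2) s2 \<in> span_below (fill c1 (lead lt s1))"
proof -
  obtain G a b where G: "is_ctx ar G" "oword ar a" "oword ar b" "lead lt s1 @ a = b @ lead lt s2"
     "length (lead lt s1 @ a) < length (lead lt s1) + length (lead lt s2)"
     "\<forall>x. fill c1 x = G (x @ a)" "\<forall>y. fill c2 y = G (b @ y)"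
    using o unfolding overlap_def by blast
  obtain c where cG: "valid_ctx ar c" "G = fill c" using G(1) unfolding is_ctx_def by blast
  have "congr_mod ar lt S (lead lt s1 @ a) (rmul s1 a - lmul b s2) 0"
    using gsb s G(2-5) unfolding GSB_def by blast
  then have h: "rmul s1 a - lmul b s2 \<in> span_below (lead lt s1 @ a)"
    by (simp add: congr_mod_iff)
  have ow: "oword ar (lead lt s1 @ a)" using S_lead[OF s(1)] G(2) by (simp add: oword_iff_valid_list)
  from wmap_span_below[OF cG(1) ow h]
  have "wmap (fill c \<circ> (\<lambda>w. w @ a)) s1 - wmap (fill c \<circ> (\<lambda>w. b @ w)) s2 \<in> span_below (fill c (lead lt s1 @ a))"
    by (simp add: wmap_diff wmap_comp rmul_wmap lmul_wmap)
  moreover have "fill c \<circ> (\<lambda>w. w @ a) = fill c1" "fill c \<circ> (\<lambda>w. b @ w) = fill c2"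
    using G(6,7) cG by (simp_all add: fun_eq_iff)
  moreover have "fill c (lead lt s1 @ a) = fill c1 (lead lt s1)" using G(6) cG by simp
  ultimately show ?thesis by simp
qed

(* Disjoint case: no composition is needed. Writing s1 = lead s1 + r1 and s2 = lead s2 + r2
   inside the common two-hole context D, the difference is D(r1, s2) - D(s1, r2), a combination of
   S-words below w. *)
lemma disjoint_diff_below:
  assumes c: "valid_ctx ar c1" "valid_ctx ar c2" and s: "s1 \<in> S" "s2 \<in> S"
    and weq: "fill c1 (lead lt s1) = fill c2 (lead lt s2)"
    and d: "disjoint ar (fill c1) (lead lt s1) (fill c2) (lead lt s2)"
  shows "wmap (fill c1) s1 - wmap (fill c2) s2 \<in> span_below (fill c1 (lead lt s1))"
proof -
  define v1 where "v1 = lead lt s1"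
  define v2 where "v2 = lead lt s2"
  define K1 where "K1 = Poly_Mapping.keys s1"
  define K2 where "K2 = Poly_Mapping.keys s2"
  define w where "w = fill c1 v1"
  obtain D where D: "\<forall>x. oword ar x \<longrightarrow> is_ctx ar (D x)" "\<forall>y. oword ar y \<longrightarrow> is_ctx ar (\<lambda>x. D x y)"
    "\<forall>x. fill c1 x = D x v2" "\<forall>y. fill c2 y = D v1 y"
    using d unfolding disjoint_def v1_def v2_def by blast
  define t where "t x y = Poly_Mapping.single (D x y) (Poly_Mapping.lookup s1 x * Poly_Mapping.lookup s2 y)" for x y
  have v1K: "v1 \<in> K1" unfolding v1_def K1_def using S_lead_key[OF s(1)] .
  have v2K: "v2 \<in> K2" unfolding v2_def K2_def using S_lead_key[OF s(2)] .
  have fK: "finite K1" "finite K2" unfolding K1_def K2_def by simp_all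
  have A: "wmap (fill c1) s1 = (\<Sum>x\<in>K1. t x v2)"
    unfolding wmap_def t_def K1_def using S_lc[OF s(2)] D(3) by (simp add: v2_def)
  have B: "wmap (fill c2) s2 = (\<Sum>y\<in>K2. t v1 y)"
    unfolding wmap_def t_def K2_def using S_lc[OF s(1)] D(4) by (simp add: v1_def)
  define Q where "Q = (\<Sum>x\<in>K1. \<Sum>y\<in>K2. t x y)"
  define T1 where "T1 = (\<Sum>x\<in>K1 - {v1}. \<Sum>y\<in>K2. t x y)"
  define T2 where "T2 = (\<Sum>x\<in>K1. \<Sum>y\<in>K2 - {v2}. t x y)"
  have Q1: "Q = (\<Sum>x\<in>K1. t x v2) + T2"
    unfolding Q_def T2_def by (simp add: sum.remove[OF fK(2) v2K] sum.distrib)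
  have Q2: "Q = (\<Sum>y\<in>K2. t v1 y) + T1"
    unfolding Q_def T1_def by (simp add: sum.remove[OF fK(1) v1K])
  have diff: "wmap (fill c1) s1 - wmap (fill c2) s2 = T1 - T2"
    using Q1 Q2 A B by (simp add: algebra_simps)
  have ow1: "oword ar v1" unfolding v1_def using S_lead[OF s(1)] .
  have ow2: "oword ar v2" unfolding v2_def using S_lead[OF s(2)] .
  have T1in: "T1 \<in> span_below w"
    unfolding T1_def
  proof (rule kspan_sum)
    fix x assume x: "x \<in> K1 - {v1}"
    have ox: "oword ar x" using x S_keys_ow[OF s(1)] unfolding K1_def by blast
    have "lt x v1" using x S_keys[OF s(1)] unfolding K1_def v1_def by blast
    then have "lt (D x v2) w" unfolding w_def using ctx_mono[OF c(1) ox ow1] D(3) by metis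
    then have g: "wmap (D x) s2 \<in> Swords (\<lambda>k. lt k w)"
      using SwordsI[of "D x" s2 "\<lambda>k. lt k w"] D(1) ox s(2) by (simp add: v2_def)
    have "(\<Sum>y\<in>K2. t x y) = scale (Poly_Mapping.lookup s1 x) (wmap (D x) s2)"
      unfolding t_def wmap_def K2_def by (simp add: scale_sum scale_single)
    then show "(\<Sum>y\<in>K2. t x y) \<in> span_below w" using kspan_sgen[OF g] by simp
  qed
  have T2': "T2 = (\<Sum>y\<in>K2 - {v2}. \<Sum>x\<in>K1. t x y)"
    unfolding T2_def by (rule sum.swap)
  have T2in: "T2 \<in> span_below w"
    unfolding T2'
  proof (rule kspan_sum)
    fix y assume y: "y \<in> K2 - {v2}"
    have oy: "oword ar y" using y S_keys_ow[OF s(2)] unfolding K2_def by blast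
    have "lt y v2" using y S_keys[OF s(2)] unfolding K2_def v2_def by blast
    then have "lt (fill c2 y) (fill c2 v2)" using ctx_mono[OF c(2) oy ow2] by blast
    then have "lt (D v1 y) w" unfolding w_def using D(4) weq by (simp add: v1_def v2_def)
    then have g: "wmap (\<lambda>x. D x y) s1 \<in> Swords (\<lambda>k. lt k w)"
      using SwordsI[of "\<lambda>x. D x y" s1 "\<lambda>k. lt k w"] D(2) oy s(1) by (simp add: v1_def)
    have "(\<Sum>x\<in>K1. t x y) = scale (Poly_Mapping.lookup s2 y) (wmap (\<lambda>x. D x y) s1)"
      unfolding t_def wmap_def K1_def by (simp add: scale_sum scale_single mult.commute)
    then show "(\<Sum>x\<in>K1. t x y) \<in> span_below w" using kspan_sgen[OF g] by simp
  qed
  show ?thesis using diff kspan_diff[OF T1in T2in] by (simp add: w_def v1_def)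
qed

lemma Sword_diff_below:
  assumes gsb: "GSB ar lt S" and c: "valid_ctx ar c1" "valid_ctx ar c2" and s: "s1 \<in> S" "s2 \<in> S"
    and weq: "fill c1 (lead lt s1) = fill c2 (lead lt s2)"
  shows "wmap (fill c1) s1 - wmap (fill c2) s2 \<in> span_below (fill c1 (lead lt s1))"
proof -
  have R: "related ar (fill c1) (lead lt s1) (fill c2) (lead lt s2)"
    using occurrences_related[OF c S_lead[OF s(1)] S_lead[OF s(2)] weq] .
  have neg: "wmap (fill c1) s1 - wmap (fill c2) s2 \<in> span_below (fill c1 (lead lt s1))"
    if "wmap (fill c2) s2 - wmap (fill c1) s1 \<in> span_below (fill c2 (lead lt s2))"
    using kspan_uminus[OF that] weq by simp
  show ?thesis
    using R unfolding related_def
  proof (elim disjE)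
    assume "nested ar (fill c1) (lead lt s1) (fill c2) (lead lt s2)"
    then show ?thesis using nested_diff_below[OF gsb c s] by blast
  next
    assume "nested ar (fill c2) (lead lt s2) (fill c1) (lead lt s1)"
    then show ?thesis using nested_diff_below[OF gsb c(2,1) s(2,1)] neg by blast
  next
    assume "overlap ar (fill c1) (lead lt s1) (fill c2) (lead lt s2)"
    then show ?thesis using overlap_diff_below[OF gsb c s] by blast
  next
    assume "overlap ar (fill c2) (lead lt s2) (fill c1) (lead lt s1)"
    then show ?thesis using overlap_diff_below[OF gsb c(2,1) s(2,1)] neg by blast
  next
    assume "disjoint ar (fill c1) (lead lt s1) (fill c2) (lead lt s2)"
    then show ?thesis using disjoint_diff_below[OF c s weq] by blast
  qed
qed

lemma span_lead_bound:
  assumes f: "f \<in> kspan (Swords P)" and nz: "f \<noteq> 0"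
  shows "\<exists>m. P m \<and> oword ar m \<and> f \<in> kspan (Swords (le_word m))"
proof -
  obtain B where B: "B \<subseteq> Swords P" "finite B" "f \<in> kspan B" using kspan_finite[OF f] by blast
  have Bne: "B \<noteq> {}" using B(3) nz kspan_empty by blast
  have ow: "\<forall>k\<in>lead lt ` B. oword ar k"
  proof
    fix k assume "k \<in> lead lt ` B"
    then obtain b where "b \<in> B" "k = lead lt b" by blast
    then show "oword ar k" using Swords_lead_oword B(1) by blast
  qed
  have "finite (lead lt ` B)" "lead lt ` B \<noteq> {}" using B(2) Bne by simp_all
  then obtain m where m: "m \<in> lead lt ` B" "\<forall>v\<in>lead lt ` B. v \<noteq> m \<longrightarrow> lt v m"
    using finite_max_exists[of "lead lt ` B"] ow by blast
  have "B \<subseteq> Swords (le_word m)"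
  proof
    fix b assume b: "b \<in> B"
    then have "lead lt b = m \<or> lt (lead lt b) m" using m(2) by blast
    then show "b \<in> Swords (le_word m)" using B(1) b Swords_change[of b P "le_word m"] by blast
  qed
  then have "f \<in> kspan (Swords (le_word m))" using kspan_mono[OF B(3)] by blast
  moreover obtain b0 where "b0 \<in> B" "m = lead lt b0" using m(1) by blast
  then have "P m" using B(1) Swords_lead_prop by blast
  ultimately show ?thesis using m(1) ow by blast
qed

definition top_split :: "('x,'o) oword \<Rightarrow> ('x,'o,'k) opoly \<Rightarrow> bool" where
  "top_split W f \<longleftrightarrow>
     f \<in> span_below W \<or> (\<exists>t\<in>Swords (\<lambda>k. k = W). f - scale (Poly_Mapping.lookup f W) t \<in> span_below W)"

lemma span_below_lookup:
  assumes "p \<in> span_below W" "oword ar W"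
  shows "Poly_Mapping.lookup p W = 0"
proof (rule ccontr)
  assume "Poly_Mapping.lookup p W \<noteq> 0"
  then have "W \<in> Poly_Mapping.keys p" by (simp add: in_keys_iff)
  then have "lt W W" using span_below_keys[OF assms] by blast
  then show False using lt_irrefl[OF assms(2)] by blast
qed

lemma top_split_add_below:
  assumes a: "a \<in> Swords (\<lambda>k. lt k W)" and W: "oword ar W" and p: "top_split W p"
  shows "top_split W (scale c a + p)"
proof -
  have aT: "scale c a \<in> span_below W" using a by (rule kspan_sgen)
  have "Poly_Mapping.lookup a W = 0"
  proof (rule ccontr)
    assume "Poly_Mapping.lookup a W \<noteq> 0"
    then have "W = lead lt a \<or> lt W (lead lt a)" using Swords_keys[OF a] by (simp add: in_keys_iff)
    then show False
      using Swords_lead_prop[OF a] lt_asym[OF Swords_lead_oword[OF a] W] lt_irrefl[OF W] by auto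
  qed
  then have shift: "scale c a + p - scale (Poly_Mapping.lookup (scale c a + p) W) t
      = scale c a + (p - scale (Poly_Mapping.lookup p W) t)" for t
    by (simp add: lookup_add)
  from p consider "p \<in> span_below W"
    | t where "t \<in> Swords (\<lambda>k. k = W)" "p - scale (Poly_Mapping.lookup p W) t \<in> span_below W"
    unfolding top_split_def by blast
  then show ?thesis
  proof cases
    case 1
    then show ?thesis using kspan_add[OF aT] unfolding top_split_def by blast
  next
    case (2 t)
    have "scale c a + p - scale (Poly_Mapping.lookup (scale c a + p) W) t \<in> span_below W"
      unfolding shift by (rule kspan_add[OF aT 2(2)])
    then show ?thesis using 2(1) unfolding top_split_def by blast
  qed
qed

(* Under GSB, adding a multiple of an S-word a with leading word W preserves top_split: if p
   already needs an S-word t at the top, a - t is trivial modulo (S,W) by the key lemma. *)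
lemma top_split_add_top:
  assumes gsb: "GSB ar lt S" and a: "a \<in> Swords (\<lambda>k. k = W)" and W: "oword ar W"
    and p: "top_split W p"
  shows "top_split W (scale c a + p)"
  using p unfolding top_split_def
proof
  assume pT: "p \<in> span_below W"
  have "Poly_Mapping.lookup (scale c a + p) W = c"
    using span_below_lookup[OF pT W] Swords_lc[OF a] Swords_lead_prop[OF a] by (simp add: lookup_add)
  then have "scale c a + p - scale (Poly_Mapping.lookup (scale c a + p) W) a = p" by simp
  then have "scale c a + p - scale (Poly_Mapping.lookup (scale c a + p) W) a \<in> span_below W"
    using pT by (simp only:)
  then show "scale c a + p \<in> span_below W \<or>
      (\<exists>t\<in>Swords (\<lambda>k. k = W). scale c a + p - scale (Poly_Mapping.lookup (scale c a + p) W) t \<in> span_below W)"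
    using a by blast
next
  assume "\<exists>t\<in>Swords (\<lambda>k. k = W). p - scale (Poly_Mapping.lookup p W) t \<in> span_below W"
  then obtain t where t: "t \<in> Swords (\<lambda>k. k = W)" "p - scale (Poly_Mapping.lookup p W) t \<in> span_below W"
    by blast
  obtain c1 s1 where cs1: "valid_ctx ar c1" "s1 \<in> S" "a = wmap (fill c1) s1"
      "lead lt a = fill c1 (lead lt s1)" "lead lt a = W"
    using Swords_lead[OF a] by blast
  obtain c2 s2 where cs2: "valid_ctx ar c2" "s2 \<in> S" "t = wmap (fill c2) s2"
      "lead lt t = fill c2 (lead lt s2)" "lead lt t = W"
    using Swords_lead[OF t(1)] by blast
  have "fill c1 (lead lt s1) = fill c2 (lead lt s2)" using cs1(4,5) cs2(4,5) by simp
  from Sword_diff_below[OF gsb cs1(1) cs2(1) cs1(2) cs2(2) this]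
  have "a - t \<in> span_below W" using cs1(3,4,5) cs2(3) by simp
  then have "scale c (a - t) \<in> span_below W" by (rule kspan_scale)
  have "Poly_Mapping.lookup (scale c a + p) W = c + Poly_Mapping.lookup p W"
    using Swords_lc[OF a] Swords_lead_prop[OF a] by (simp add: lookup_add)
  then have eq: "scale c a + p - scale (Poly_Mapping.lookup (scale c a + p) W) t
      = scale c (a - t) + (p - scale (Poly_Mapping.lookup p W) t)"
    by (simp add: scale_diff scale_add_left algebra_simps)
  have "scale c a + p - scale (Poly_Mapping.lookup (scale c a + p) W) t \<in> span_below W"
    unfolding eq by (rule kspan_add[OF \<open>scale c (a - t) \<in> span_below W\<close> t(2)])
  then show "scale c a + p \<in> span_below W \<or>
      (\<exists>t\<in>Swords (\<lambda>k. k = W). scale c a + p - scale (Poly_Mapping.lookup (scale c a + p) W) t \<in> span_below W)"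
    using t(1) by blast
qed

lemma span_le_split:
  assumes gsb: "GSB ar lt S" and f: "f \<in> kspan (Swords (le_word W))" and W: "oword ar W"
  shows "top_split W f"
  using f
proof (induction f rule: kspan.induct)
  case zero then show ?case by (auto simp: top_split_def intro: kspan.zero)
next
  case (add a p c)
  show ?case
  proof (cases "lt (lead lt a) W")
    case True
    then have "a \<in> Swords (\<lambda>k. lt k W)" using Swords_change[OF add.hyps(1), of "\<lambda>k. lt k W"] by simp
    then show ?thesis by (rule top_split_add_below[OF _ W add.IH])
  next
    case False
    then have "a \<in> Swords (\<lambda>k. k = W)"
      using Swords_change[OF add.hyps(1), of "\<lambda>k. k = W"] Swords_lead_prop[OF add.hyps(1)] by simp
    then show ?thesis by (rule top_split_add_top[OF gsb _ W add.IH])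
  qed
qed
section \<open>(I) implies (II)\<close>

definition lead_divisible :: bool where
  "lead_divisible \<longleftrightarrow> (\<forall>f\<in>Id ar S. f \<noteq> 0 \<longrightarrow> (\<exists>u s. star_word ar u \<and> s \<in> S \<and> lead lt f = subst u (lead lt s)))"

(* (I) implies (II), for elements of the span of S-words bounded by W: by well-founded
   induction on W; either f is a combination of S-words below W, or its leading word is W itself. *)
lemma GSB_lead_divisible_le:
  assumes gsb: "GSB ar lt S" and W: "oword ar W"
  shows "\<forall>f. f \<in> kspan (Swords (le_word W)) \<longrightarrow> f \<noteq> 0 \<longrightarrow> (\<exists>c s. valid_ctx ar c \<and> s \<in> S \<and> lead lt f = fill c (lead lt s))"
proof (rule oword_induct[OF W])
  fix W assume hyp: "oword ar W" and IH: "\<And>V. oword ar V \<Longrightarrow> lt V W \<Longrightarrow>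
    \<forall>f. f \<in> kspan (Swords (le_word V)) \<longrightarrow> f \<noteq> 0 \<longrightarrow> (\<exists>c s. valid_ctx ar c \<and> s \<in> S \<and> lead lt f = fill c (lead lt s))"
  show "\<forall>f. f \<in> kspan (Swords (le_word W)) \<longrightarrow> f \<noteq> 0 \<longrightarrow> (\<exists>c s. valid_ctx ar c \<and> s \<in> S \<and> lead lt f = fill c (lead lt s))"
  proof (intro allI impI)
    fix f assume f: "f \<in> kspan (Swords (le_word W))" and nz: "f \<noteq> 0"
    have lowcase: "\<exists>c s. valid_ctx ar c \<and> s \<in> S \<and> lead lt f = fill c (lead lt s)" if fT: "f \<in> span_below W"
    proof -
      obtain m where m: "lt m W" "oword ar m" "f \<in> kspan (Swords (le_word m))"
        using span_lead_bound[OF fT nz] by blast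
      then show ?thesis using IH[OF m(2) m(1)] nz by blast
    qed
    from span_le_split[OF gsb f hyp, unfolded top_split_def] show "\<exists>c s. valid_ctx ar c \<and> s \<in> S \<and> lead lt f = fill c (lead lt s)"
    proof
      assume "f \<in> span_below W" then show ?thesis by (rule lowcase)
    next
      assume "\<exists>t\<in>Swords (\<lambda>k. k = W). f - scale (Poly_Mapping.lookup f W) t \<in> span_below W"
      then obtain t where t: "t \<in> Swords (\<lambda>k. k = W)" "f - scale (Poly_Mapping.lookup f W) t \<in> span_below W" by blast
      show ?thesis
      proof (cases "Poly_Mapping.lookup f W = 0")
        case True
        then show ?thesis using t(2) lowcase by simp
      next
        case False
        then have Wk: "W \<in> Poly_Mapping.keys f" by (simp add: in_keys_iff)
        have "lead lt f = W"
        proof (rule lead_eqI)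
          show "opoly ar f" using span_opoly[OF f] .
          show "W \<in> Poly_Mapping.keys f" by (rule Wk)
          show "\<forall>v\<in>Poly_Mapping.keys f. v \<noteq> W \<longrightarrow> lt v W"
            using span_le_keys[OF f hyp] by blast
        qed
        moreover obtain c s where "valid_ctx ar c" "s \<in> S" "lead lt t = fill c (lead lt s)" "lead lt t = W"
          using Swords_lead[OF t(1)] by blast
        ultimately show ?thesis by metis
      qed
    qed
  qed
qed

lemma GSB_lead_divisible:
  assumes gsb: "GSB ar lt S" and f: "f \<in> Id ar S" and nz: "f \<noteq> 0"
  shows "\<exists>u s. star_word ar u \<and> s \<in> S \<and> lead lt f = subst u (lead lt s)"
proof -
  obtain m where m: "oword ar m" "f \<in> kspan (Swords (le_word m))"
    using span_lead_bound[of f "\<lambda>_. True"] f nz by (auto simp: Id_eq_span)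
  obtain c s where cs: "valid_ctx ar c" "s \<in> S" "lead lt f = fill c (lead lt s)"
    using GSB_lead_divisible_le[OF gsb m(1)] m(2) nz by blast
  obtain u where "star_word ar u" "subst u = fill c" using ctx_star_word[OF cs(1)] by blast
  then show ?thesis using cs by metis
qed

section \<open>(II) implies (II')\<close>

definition ordered_rep_le :: "('x,'o,'k) opoly \<Rightarrow> ('x,'o) oword \<Rightarrow> bool" where
  "ordered_rep_le h B \<longleftrightarrow> (\<exists>(n::nat) (\<alpha>::nat \<Rightarrow> 'k) u s.
       (\<forall>i < n. star_word ar (u i) \<and> s i \<in> S) \<and>
       h = (\<Sum>i < n. scale (\<alpha> i) (subst_poly (u i) (s i))) \<and>
       (\<forall>i j. i < j \<and> j < n \<longrightarrow> lt (subst (u j) (lead lt (s j))) (subst (u i) (lead lt (s i)))) \<and>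
       (\<forall>i<n. subst (u i) (lead lt (s i)) = B \<or> lt (subst (u i) (lead lt (s i))) B))"

lemma ordered_rep_le_cons:
  assumes r: "ordered_rep_le h B" and B: "oword ar B" "lt B W" and W: "oword ar W"
    and us0: "star_word ar u0" "s0 \<in> S" "W = subst u0 (lead lt s0)"
  shows "ordered_rep_le (scale c0 (subst_poly u0 s0) + h) W"
proof -
  obtain n :: nat and \<alpha> u s where r: "\<forall>i < n. star_word ar (u i) \<and> s i \<in> S"
    "h = (\<Sum>i < n. scale (\<alpha> i) (subst_poly (u i) (s i)))"
    "\<forall>i j. i < j \<and> j < n \<longrightarrow> lt (subst (u j) (lead lt (s j))) (subst (u i) (lead lt (s i)))"
    "\<forall>i<n. subst (u i) (lead lt (s i)) = B \<or> lt (subst (u i) (lead lt (s i))) B"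
    using r unfolding ordered_rep_le_def by blast
  define \<alpha>' where "\<alpha>' i = (case i of 0 \<Rightarrow> c0 | Suc j \<Rightarrow> \<alpha> j)" for i
  define u' where "u' i = (case i of 0 \<Rightarrow> u0 | Suc j \<Rightarrow> u j)" for i
  define s' where "s' i = (case i of 0 \<Rightarrow> s0 | Suc j \<Rightarrow> s j)" for i
  have lW: "lt (subst (u j) (lead lt (s j))) W" if "j < n" for j
  proof -
    have "star_word ar (u j)" "s j \<in> S" using r(1) that by auto
    then have oj: "oword ar (subst (u j) (lead lt (s j)))" by (rule subst_poly_Sword(2))
    show ?thesis using r(4) that lt_trans[OF oj B(1) W] B(2) by auto
  qed
  have P1: "\<forall>i < Suc n. star_word ar (u' i) \<and> s' i \<in> S"
    using r(1) us0 by (auto simp: u'_def s'_def split: nat.split)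
  have P2: "scale c0 (subst_poly u0 s0) + h = (\<Sum>i < Suc n. scale (\<alpha>' i) (subst_poly (u' i) (s' i)))"
    using r(2) unfolding sum.lessThan_Suc_shift by (simp add: \<alpha>'_def u'_def s'_def)
  have P3: "\<forall>i j. i < j \<and> j < Suc n \<longrightarrow> lt (subst (u' j) (lead lt (s' j))) (subst (u' i) (lead lt (s' i)))"
  proof (intro allI impI, elim conjE)
    fix i j :: nat assume ij: "i < j" "j < Suc n"
    then obtain j' where j': "j = Suc j'" "j' < n" by (cases j) auto
    show "lt (subst (u' j) (lead lt (s' j))) (subst (u' i) (lead lt (s' i)))"
    proof (cases i)
      case 0 then show ?thesis using lW[OF j'(2)] us0(3) j' by (simp add: u'_def s'_def)
    next
      case (Suc i') then show ?thesis using r(3) ij j' by (simp add: u'_def s'_def)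
    qed
  qed
  have P4: "\<forall>i<Suc n. subst (u' i) (lead lt (s' i)) = W \<or> lt (subst (u' i) (lead lt (s' i))) W"
  proof (intro allI impI)
    fix i assume "i < Suc n"
    then show "subst (u' i) (lead lt (s' i)) = W \<or> lt (subst (u' i) (lead lt (s' i))) W"
      using lW us0(3) by (cases i) (auto simp: u'_def s'_def)
  qed
  show ?thesis unfolding ordered_rep_le_def
    by (rule exI[of _ "Suc n"], rule exI[of _ \<alpha>'], rule exI[of _ u'], rule exI[of _ s'])
       (intro conjI P1 P2 P3 P4)
qed

(* Under (II) every nonzero h in Id(S) with leading word W has such a representation bounded by
   W: subtract the S-word with leading word W and recurse on the (smaller) leading word. *)
lemma ordered_rep_le_exists:
  assumes lead_div: lead_divisible and W: "oword ar W"
  shows "\<forall>h. h \<in> Id ar S \<and> h \<noteq> 0 \<and> lead lt h = W \<longrightarrow> ordered_rep_le h W"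
proof (rule oword_induct[OF W])
  fix W assume hyp: "oword ar W" and IH: "\<And>V. oword ar V \<Longrightarrow> lt V W \<Longrightarrow>
    \<forall>h. h \<in> Id ar S \<and> h \<noteq> 0 \<and> lead lt h = V \<longrightarrow> ordered_rep_le h V"
  show "\<forall>h. h \<in> Id ar S \<and> h \<noteq> 0 \<and> lead lt h = W \<longrightarrow> ordered_rep_le h W"
  proof (intro allI impI, elim conjE)
    fix h assume h: "h \<in> Id ar S" "h \<noteq> 0" "lead lt h = W"
    obtain u0 s0 where us0: "star_word ar u0" "s0 \<in> S" "W = subst u0 (lead lt s0)"
      using lead_div h unfolding lead_divisible_def by blast
    define t where "t = subst_poly u0 s0"
    have tG: "t \<in> Swords (\<lambda>k. k = W)" using subst_poly_Sword(1)[OF us0(1,2)] us0(3) by (simp add: t_def)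
    have lt1: "Poly_Mapping.lookup t W = 1" using Swords_lc[OF tG] Swords_lead_prop[OF tG] by simp
    define c0 where "c0 = Poly_Mapping.lookup h W"
    define h' where "h' = h - scale c0 t"
    have h'Id: "h' \<in> Id ar S" unfolding h'_def using Id_diff_scale[OF h(1) tG] .
    have hop: "opoly ar h" using Id_opoly[OF h(1)] .
    have lh: "\<forall>k\<in>Poly_Mapping.keys h. k = W \<or> lt k W" using key_lt_lead[OF hop h(2)] h(3) by blast
    have lt': "\<forall>k\<in>Poly_Mapping.keys t. k = W \<or> lt k W"
      using Swords_keys[OF tG] Swords_lead_prop[OF tG] by blast
    show "ordered_rep_le h W"
    proof (cases "h' = 0")
      case True
      then have "h = scale c0 t" unfolding h'_def by simp
      then have "h = (\<Sum>i<(1::nat). scale ((\<lambda>_. c0) i) (subst_poly ((\<lambda>_. u0) i) ((\<lambda>_. s0) i)))"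
        by (simp add: t_def)
      then show ?thesis unfolding ordered_rep_le_def using us0
        by (intro exI[of _ "1::nat"] exI[of _ "\<lambda>_. c0"] exI[of _ "\<lambda>_. u0"] exI[of _ "\<lambda>_. s0"]) auto
    next
      case False
      have kh': "\<forall>k\<in>Poly_Mapping.keys h'. k = W \<or> lt k W"
      proof
        fix k assume "k \<in> Poly_Mapping.keys h'"
        then have "k \<in> Poly_Mapping.keys h \<or> k \<in> Poly_Mapping.keys t"
          using keys_diff[of h "scale c0 t"] keys_scale_sub[of c0 t] unfolding h'_def by blast
        then show "k = W \<or> lt k W" using lh lt' by blast
      qed
      have l0: "Poly_Mapping.lookup h' W = 0" unfolding h'_def c0_def using lt1 by (simp add: lookup_minus)
      have ltW: "lt (lead lt h') W" using lead_lt_of_vanishing[OF Id_opoly[OF h'Id] False hyp kh' l0] .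
      have ow': "oword ar (lead lt h')" using lead_oword[OF Id_opoly[OF h'Id] False] .
      have "ordered_rep_le h' (lead lt h')" using IH[OF ow' ltW] h'Id False by simp
      moreover have "h = scale c0 (subst_poly u0 s0) + h'" unfolding h'_def t_def by simp
      ultimately show ?thesis using ordered_rep_le_cons[OF _ ow' ltW hyp us0] by simp
    qed
  qed
qed

lemma ordered_rep_exists:
  assumes lead_div: lead_divisible and h: "h \<in> Id ar S" "h \<noteq> 0"
  shows "ordered_rep_le h (lead lt h)"
  using ordered_rep_le_exists[OF lead_div lead_oword[OF Id_opoly[OF h(1)] h(2)]] h by blast

section \<open>(II) implies (I)\<close>

lemma ordered_rep_span_below:
  assumes r: "ordered_rep_le h B" and Bw: "lt B w" and oB: "oword ar B" and ow: "oword ar w"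
  shows "h \<in> span_below w"
proof -
  obtain n :: nat and \<alpha> u s where r: "\<forall>i < n. star_word ar (u i) \<and> s i \<in> S"
        "h = (\<Sum>i < n. scale (\<alpha> i) (subst_poly (u i) (s i)))"
        "\<forall>i<n. subst (u i) (lead lt (s i)) = B \<or> lt (subst (u i) (lead lt (s i))) B"
    using r unfolding ordered_rep_le_def by blast
  show ?thesis unfolding r(2)
  proof (rule kspan_sum)
    fix i assume "i \<in> {..<n}"
    then have i: "star_word ar (u i)" "s i \<in> S"
      "subst (u i) (lead lt (s i)) = B \<or> lt (subst (u i) (lead lt (s i))) B" using r by auto
    have oi: "oword ar (subst (u i) (lead lt (s i)))" using subst_poly_Sword(2)[OF i(1,2)] .
    have "lt (subst (u i) (lead lt (s i))) w"
      using i(3)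
    proof
      assume "subst (u i) (lead lt (s i)) = B" then show ?thesis using Bw by simp
    next
      assume "lt (subst (u i) (lead lt (s i))) B" then show ?thesis using lt_trans[OF oi oB ow] Bw by blast
    qed
    then have "subst_poly (u i) (s i) \<in> Swords (\<lambda>k. lt k w)"
      using Swords_change[OF subst_poly_Sword(1)[OF i(1,2)], of "\<lambda>k. lt k w"] Swords_lead_prop[OF subst_poly_Sword(1)[OF i(1,2)]] by simp
    then show "scale (\<alpha> i) (subst_poly (u i) (s i)) \<in> span_below w" by (rule kspan_sgen)
  qed
qed

lemma same_lead_diff_below:
  assumes lead_div: lead_divisible and g: "g1 \<in> Swords (\<lambda>k. k = w)" "g2 \<in> Swords (\<lambda>k. k = w)"
  shows "g1 - g2 \<in> span_below w"
proof (cases "g1 - g2 = 0")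
  case True then show ?thesis by (simp add: kspan.zero)
next
  case False
  have w1: "lead lt g1 = w" "lead lt g2 = w" using Swords_lead_prop[OF g(1)] Swords_lead_prop[OF g(2)] by simp_all
  have ow: "oword ar w" using Swords_lead_oword[OF g(1)] w1 by simp
  have hId: "g1 - g2 \<in> Id ar S" using Swords_Id[OF g(1)] Swords_Id[OF g(2)] unfolding Id_eq_span by (rule kspan_diff)
  have kb: "\<forall>k\<in>Poly_Mapping.keys (g1 - g2). k = w \<or> lt k w"
  proof
    fix k assume "k \<in> Poly_Mapping.keys (g1 - g2)"
    then have "k \<in> Poly_Mapping.keys g1 \<or> k \<in> Poly_Mapping.keys g2" using keys_diff[of g1 g2] by blast
    then show "k = w \<or> lt k w"
    proof
      assume "k \<in> Poly_Mapping.keys g1"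
      from Swords_keys[OF g(1) this] show ?thesis using w1 by simp
    next
      assume "k \<in> Poly_Mapping.keys g2"
      from Swords_keys[OF g(2) this] show ?thesis using w1 by simp
    qed
  qed
  have l0: "Poly_Mapping.lookup (g1 - g2) w = 0"
    using Swords_lc[OF g(1)] Swords_lc[OF g(2)] w1 by (simp add: lookup_minus)
  have lw: "lt (lead lt (g1 - g2)) w" using lead_lt_of_vanishing[OF Id_opoly[OF hId] False ow kb l0] .
  have "ordered_rep_le (g1 - g2) (lead lt (g1 - g2))" using ordered_rep_exists[OF lead_div hId False] .
  from ordered_rep_span_below[OF this lw lead_oword[OF Id_opoly[OF hId] False] ow] show ?thesis .
qed

lemma intersection_comp_trivial:
  assumes lead_div: lead_divisible and fg: "f \<in> S" "g \<in> S" and ab: "oword ar a" "oword ar b"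
    and w: "w = lead lt f @ a" "w = b @ lead lt g"
  shows "congr_mod ar lt S w (rmul f a - lmul b g) 0"
proof -
  have va: "valid_ctx ar (Hole [] a)" "valid_ctx ar (Hole b [])" using ab by (auto simp: oword_iff_valid_list)
  have "fill (Hole [] a) = (\<lambda>w. w @ a)" by (simp add: fun_eq_iff)
  then have "rmul f a = wmap (fill (Hole [] a)) f" by (simp add: rmul_wmap)
  then have g1: "rmul f a \<in> Swords (\<lambda>k. k = w)"
    using SwordsI[OF is_ctx_fill[OF va(1)] fg(1), of "\<lambda>k. k = w"] w by simp
  have "fill (Hole b []) = (\<lambda>w. b @ w)" by (simp add: fun_eq_iff)
  then have "lmul b g = wmap (fill (Hole b [])) g" by (simp add: lmul_wmap)
  then have g2: "lmul b g \<in> Swords (\<lambda>k. k = w)"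
    using SwordsI[OF is_ctx_fill[OF va(2)] fg(2), of "\<lambda>k. k = w"] w by simp
  show ?thesis using same_lead_diff_below[OF lead_div g1 g2] by (simp add: congr_mod_iff)
qed

lemma including_comp_trivial:
  assumes lead_div: lead_divisible and fg: "f \<in> S" "g \<in> S" and u: "star_word ar u" "lead lt f = subst u (lead lt g)"
  shows "congr_mod ar lt S (lead lt f) (f - subst_poly u g) 0"
proof -
  have v0: "valid_ctx ar (Hole [] [])" by simp
  have fe: "fill (Hole [] []) = (\<lambda>w. w)" by (simp add: fun_eq_iff)
  have "f = wmap (fill (Hole [] [])) f" unfolding fe by (rule wmap_id[symmetric])
  then have g1: "f \<in> Swords (\<lambda>k. k = lead lt f)"
    using SwordsI[OF is_ctx_fill[OF v0] fg(1), of "\<lambda>k. k = lead lt f"] by simp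
  have g2: "subst_poly u g \<in> Swords (\<lambda>k. k = lead lt f)" using subst_poly_Sword(1)[OF u(1) fg(2)] u(2) by simp
  show ?thesis using same_lead_diff_below[OF lead_div g1 g2] by (simp add: congr_mod_iff)
qed

lemma lead_divisible_GSB: "lead_divisible \<Longrightarrow> GSB ar lt S"
  unfolding GSB_def using intersection_comp_trivial including_comp_trivial by blast

section \<open>(II') implies (II)\<close>

lemma subst_poly_keys:
  assumes "star_word ar u" "s \<in> S"
  shows "k \<in> Poly_Mapping.keys (subst_poly u s) \<Longrightarrow>
           oword ar k \<and> (k = subst u (lead lt s) \<or> lt k (subst u (lead lt s)))"
    and "Poly_Mapping.lookup (subst_poly u s) (subst u (lead lt s)) = 1"
  using Swords_keys[OF subst_poly_Sword(1)[OF assms]] Swords_lc[OF subst_poly_Sword(1)[OF assms]]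
    Swords_lead_prop[OF subst_poly_Sword(1)[OF assms]] by auto

(* In a sum of S-words with strictly decreasing leading words whose first nonzero coefficient
   is at position i0, the coefficient at the i0-th leading word is alpha i0: later S-words live
   strictly below it. *)
lemma ordered_sum_lookup_top:
  fixes n :: nat and \<alpha> :: "nat \<Rightarrow> 'k"
  assumes r1: "\<forall>i < n. star_word ar (u i) \<and> s i \<in> S"
    and r3: "\<forall>i j. i < j \<and> j < n \<longrightarrow> lt (subst (u j) (lead lt (s j))) (subst (u i) (lead lt (s i)))"
    and i0: "i0 < n" "\<forall>i < i0. \<alpha> i = 0"
  shows "Poly_Mapping.lookup (\<Sum>i < n. scale (\<alpha> i) (subst_poly (u i) (s i))) (subst (u i0) (lead lt (s i0)))
         = \<alpha> i0"
proof -
  define w where "w i = subst (u i) (lead lt (s i))" for i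
  have ow: "oword ar (w i)" if "i < n" for i using subst_poly_Sword(2) r1 that unfolding w_def by blast
  have others: "\<alpha> i * Poly_Mapping.lookup (subst_poly (u i) (s i)) (w i0) = 0" if "i \<in> {..<n} - {i0}" for i
  proof (cases "i < i0")
    case True then show ?thesis using i0(2) by simp
  next
    case False
    then have i: "i0 < i" "i < n" using that by auto
    have "w i0 \<notin> Poly_Mapping.keys (subst_poly (u i) (s i))"
    proof
      assume "w i0 \<in> Poly_Mapping.keys (subst_poly (u i) (s i))"
      then have "w i0 = w i \<or> lt (w i0) (w i)" using subst_poly_keys(1) r1 i(2) unfolding w_def by blast
      moreover have "lt (w i) (w i0)" using r3 i unfolding w_def by blast
      ultimately show False using lt_asym[OF ow[OF i(2)] ow[OF i0(1)]] lt_irrefl[OF ow[OF i0(1)]] by auto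
    qed
    then show ?thesis by (simp add: in_keys_iff)
  qed
  have "Poly_Mapping.lookup (\<Sum>i < n. scale (\<alpha> i) (subst_poly (u i) (s i))) (w i0)
      = \<alpha> i0 * Poly_Mapping.lookup (subst_poly (u i0) (s i0)) (w i0)
        + (\<Sum>i\<in>{..<n} - {i0}. \<alpha> i * Poly_Mapping.lookup (subst_poly (u i) (s i)) (w i0))"
    using sum.remove[of "{..<n}" i0] i0(1) by (simp add: lookup_sum)
  also have "\<dots> = \<alpha> i0" using others subst_poly_keys(2) r1 i0(1) unfolding w_def by simp
  finally show ?thesis unfolding w_def .
qed

lemma ordered_sum_keys_below:
  fixes n :: nat and \<alpha> :: "nat \<Rightarrow> 'k"
  assumes r1: "\<forall>i < n. star_word ar (u i) \<and> s i \<in> S"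
    and r3: "\<forall>i j. i < j \<and> j < n \<longrightarrow> lt (subst (u j) (lead lt (s j))) (subst (u i) (lead lt (s i)))"
    and i0: "i0 < n" "\<forall>i < i0. \<alpha> i = 0"
    and v: "v \<in> Poly_Mapping.keys (\<Sum>i < n. scale (\<alpha> i) (subst_poly (u i) (s i)))"
      "v \<noteq> subst (u i0) (lead lt (s i0))"
  shows "lt v (subst (u i0) (lead lt (s i0)))"
proof -
  define w where "w i = subst (u i) (lead lt (s i))" for i
  have ow: "oword ar (w i)" if "i < n" for i using subst_poly_Sword(2) r1 that unfolding w_def by blast
  have "(\<Sum>i<n. \<alpha> i * Poly_Mapping.lookup (subst_poly (u i) (s i)) v) \<noteq> 0"
    using v(1) by (simp add: in_keys_iff lookup_sum)
  then obtain i where "i \<in> {..<n}" "\<alpha> i * Poly_Mapping.lookup (subst_poly (u i) (s i)) v \<noteq> 0"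
    by (meson sum.not_neutral_contains_not_neutral)
  then have i: "i < n" "\<alpha> i \<noteq> 0" "v \<in> Poly_Mapping.keys (subst_poly (u i) (s i))"
    by (auto simp: in_keys_iff)
  have vw: "oword ar v \<and> (v = w i \<or> lt v (w i))" using subst_poly_keys(1) r1 i unfolding w_def by blast
  have "i0 \<le> i" using i(2) i0(2) by (meson not_le)
  then consider "i = i0" | "lt (w i) (w i0)" using r3 i(1) unfolding w_def by fastforce
  then show ?thesis
  proof cases
    case 1 then show ?thesis using vw v(2) unfolding w_def by blast
  next
    case 2 then show ?thesis using vw lt_trans[OF _ ow[OF i(1)] ow[OF i0(1)]] unfolding w_def by blast
  qed
qed

(* (II') implies (II): in an ordered representation the first S-word with a nonzero coefficient
   determines the leading word of the sum. *)
lemma ordered_rep_lead: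
  fixes n :: nat and \<alpha> :: "nat \<Rightarrow> 'k"
  assumes f: "f \<in> Id ar S" "f \<noteq> 0"
    and r1: "\<forall>i < n. star_word ar (u i) \<and> s i \<in> S"
    and r2: "f = (\<Sum>i < n. scale (\<alpha> i) (subst_poly (u i) (s i)))"
    and r3: "\<forall>i j. i < j \<and> j < n \<longrightarrow> lt (subst (u j) (lead lt (s j))) (subst (u i) (lead lt (s i)))"
  shows "\<exists>u s. star_word ar u \<and> s \<in> S \<and> lead lt f = subst u (lead lt s)"
proof -
  have ex: "\<exists>i. i < n \<and> \<alpha> i \<noteq> 0"
  proof (rule ccontr)
    assume "\<nexists>i. i < n \<and> \<alpha> i \<noteq> 0"
    then have "f = 0" unfolding r2 by simp
    then show False using f(2) by simp
  qed
  define i0 where "i0 = (LEAST i. i < n \<and> \<alpha> i \<noteq> 0)"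
  have i0P: "i0 < n \<and> \<alpha> i0 \<noteq> 0" unfolding i0_def by (rule LeastI_ex[OF ex])
  have below_i0: "\<alpha> i = 0" if "i < i0" for i
  proof -
    have "\<not> (i < n \<and> \<alpha> i \<noteq> 0)" using not_less_Least[of i "\<lambda>i. i < n \<and> \<alpha> i \<noteq> 0"] that
      unfolding i0_def by blast
    then show ?thesis using that i0P by simp
  qed
  have i0: "i0 < n" "\<alpha> i0 \<noteq> 0" "\<forall>i < i0. \<alpha> i = 0" using i0P below_i0 by auto
  have "lead lt f = subst (u i0) (lead lt (s i0))"
  proof (rule lead_eqI)
    show "opoly ar f" using Id_opoly[OF f(1)] .
    show "subst (u i0) (lead lt (s i0)) \<in> Poly_Mapping.keys f"
      using ordered_sum_lookup_top[OF r1 r3 i0(1,3)] i0(2) r2 by (simp add: in_keys_iff)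
    show "\<forall>v\<in>Poly_Mapping.keys f. v \<noteq> subst (u i0) (lead lt (s i0)) \<longrightarrow> lt v (subst (u i0) (lead lt (s i0)))"
    proof (intro ballI impI)
      fix v assume v: "v \<in> Poly_Mapping.keys f" "v \<noteq> subst (u i0) (lead lt (s i0))"
      have "v \<in> Poly_Mapping.keys (\<Sum>i < n. scale (\<alpha> i) (subst_poly (u i) (s i)))" using v(1) r2 by simp
      from ordered_sum_keys_below[OF r1 r3 i0(1,3) this v(2)]
      show "lt v (subst (u i0) (lead lt (s i0)))" .
    qed
  qed
  then show ?thesis using r1 i0(1) by blast
qed

lemma lead_divisible_iff_ordered_reps:
  "lead_divisible \<longleftrightarrow>
     (\<forall>f \<in> Id ar S. f \<noteq> 0 \<longrightarrow>
        (\<exists>(n::nat) (\<alpha>::nat \<Rightarrow> 'k) u s.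
           (\<forall>i < n. star_word ar (u i) \<and> s i \<in> S) \<and>
           f = (\<Sum>i < n. scale (\<alpha> i) (subst_poly (u i) (s i))) \<and>
           (\<forall>i j. i < j \<and> j < n \<longrightarrow>
              lt (subst (u j) (lead lt (s j))) (subst (u i) (lead lt (s i))))))"
    (is "_ \<longleftrightarrow> (\<forall>f \<in> Id ar S. f \<noteq> 0 \<longrightarrow> ?rep f)")
proof
  assume lead_div: lead_divisible
  show "\<forall>f \<in> Id ar S. f \<noteq> 0 \<longrightarrow> ?rep f"
  proof (intro ballI impI)
    fix f assume "f \<in> Id ar S" "f \<noteq> 0"
    from ordered_rep_exists[OF lead_div this] show "?rep f"
      unfolding ordered_rep_le_def by blast
  qed
next
  assume reps: "\<forall>f \<in> Id ar S. f \<noteq> 0 \<longrightarrow> ?rep f"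
  show lead_divisible
    unfolding lead_divisible_def
  proof (intro ballI impI)
    fix f assume f: "f \<in> Id ar S" "f \<noteq> 0"
    then obtain n :: nat and \<alpha> :: "nat \<Rightarrow> 'k" and u s where
      "\<forall>i < n. star_word ar (u i) \<and> s i \<in> S"
      "f = (\<Sum>i < n. scale (\<alpha> i) (subst_poly (u i) (s i)))"
      "\<forall>i j. i < j \<and> j < n \<longrightarrow> lt (subst (u j) (lead lt (s j))) (subst (u i) (lead lt (s i)))"
      using reps by blast
    from ordered_rep_lead[OF f this]
    show "\<exists>u s. star_word ar u \<and> s \<in> S \<and> lead lt f = subst u (lead lt s)" .
  qed
qed
section \<open>Normal forms and (III)\<close>

lemma Irr_oword: "k \<in> Irr ar lt S \<Longrightarrow> oword ar k"
  unfolding Irr_def by blast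

definition normal_form :: "('x,'o,'k) opoly \<Rightarrow> ('x,'o,'k) opoly \<Rightarrow> bool" where
  "normal_form f g \<longleftrightarrow> Poly_Mapping.keys g \<subseteq> Irr ar lt S \<and> f - g \<in> Id ar S"

lemma drop_top_term:
  assumes f: "opoly ar f" "\<forall>k\<in>Poly_Mapping.keys f. k = W \<or> lt k W" and W: "oword ar W"
  defines "f1 \<equiv> f - Poly_Mapping.single W (Poly_Mapping.lookup f W)"
  shows "opoly ar f1" "\<forall>k\<in>Poly_Mapping.keys f1. lt k W"
proof -
  have keys: "k \<in> Poly_Mapping.keys f \<and> k \<noteq> W" if "k \<in> Poly_Mapping.keys f1" for k
    using that unfolding f1_def
    by (auto simp: in_keys_iff lookup_minus lookup_single when_def split: if_splits)
  show "opoly ar f1" using keys f(1) unfolding opoly_def by blast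
  show "\<forall>k\<in>Poly_Mapping.keys f1. lt k W" using keys f(2) by blast
qed

lemma cancel_top_term:
  assumes f: "opoly ar f" "\<forall>k\<in>Poly_Mapping.keys f. k = W \<or> lt k W"
    and us: "star_word ar u" "s \<in> S" "W = subst u (lead lt s)"
  defines "f1 \<equiv> f - scale (Poly_Mapping.lookup f W) (subst_poly u s)"
  shows "opoly ar f1" "\<forall>k\<in>Poly_Mapping.keys f1. lt k W" "f - f1 \<in> Id ar S"
proof -
  define t where "t = subst_poly u s"
  have tG: "t \<in> Swords (\<lambda>k. k = W)" using subst_poly_Sword(1)[OF us(1,2)] us(3) by (simp add: t_def)
  have tl: "Poly_Mapping.lookup t W = 1" using Swords_lc[OF tG] Swords_lead_prop[OF tG] by simp
  have tk: "\<forall>k\<in>Poly_Mapping.keys t. oword ar k \<and> (k = W \<or> lt k W)"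
    using Swords_keys[OF tG] Swords_lead_prop[OF tG] by simp
  have kk: "k \<in> Poly_Mapping.keys f \<or> k \<in> Poly_Mapping.keys t" if "k \<in> Poly_Mapping.keys f1" for k
    using keys_diff[of f "scale (Poly_Mapping.lookup f W) t"] keys_scale_sub that
    unfolding f1_def t_def by blast
  show "opoly ar f1" using kk f(1) tk unfolding opoly_def by blast
  show "\<forall>k\<in>Poly_Mapping.keys f1. lt k W"
  proof
    fix k assume k: "k \<in> Poly_Mapping.keys f1"
    then have "k \<noteq> W" unfolding f1_def using tl t_def by (auto simp: in_keys_iff lookup_minus)
    moreover have "k = W \<or> lt k W" using kk[OF k] f(2) tk by blast
    ultimately show "lt k W" by blast
  qed
  have "f - f1 = scale (Poly_Mapping.lookup f W) t" unfolding f1_def t_def by simp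
  then show "f - f1 \<in> Id ar S" using Swords_Id[OF tG] unfolding Id_eq_span by (simp add: kspan_scale)
qed

(* Normal forms strictly below W exist as soon as normal forms below every V < W exist;
   the bound is preserved because a normal form below the leading word of f stays below W. *)
lemma normal_form_lt_from_le:
  assumes le: "\<And>V f. oword ar V \<Longrightarrow> lt V W \<Longrightarrow> opoly ar f \<Longrightarrow> \<forall>k\<in>Poly_Mapping.keys f. k = V \<or> lt k V
                 \<Longrightarrow> \<exists>g. normal_form f g \<and> (\<forall>k\<in>Poly_Mapping.keys g. k = V \<or> lt k V)"
    and W: "oword ar W" and f: "opoly ar f" "\<forall>k\<in>Poly_Mapping.keys f. lt k W"
  shows "\<exists>g. normal_form f g \<and> (\<forall>k\<in>Poly_Mapping.keys g. lt k W)"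
proof (cases "f = 0")
  case True
  then show ?thesis by (intro exI[of _ 0]) (simp add: normal_form_def Id_eq_span kspan.zero)
next
  case False
  define m where "m = lead lt f"
  have ltm: "lt m W" using f(2) lead_in_keys[OF f(1) False] unfolding m_def by blast
  have om: "oword ar m" unfolding m_def using lead_oword[OF f(1) False] .
  have fm: "\<forall>k\<in>Poly_Mapping.keys f. k = m \<or> lt k m"
    using key_lt_lead[OF f(1) False] unfolding m_def by blast
  obtain g where g: "normal_form f g" "\<forall>k\<in>Poly_Mapping.keys g. k = m \<or> lt k m"
    using le[OF om ltm f(1) fm] by blast
  have "lt k W" if k: "k \<in> Poly_Mapping.keys g" for k
  proof -
    have ok: "oword ar k" using g(1) k Irr_oword unfolding normal_form_def by blast
    have "k = m \<or> lt k m" using g(2) k by blast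
    then show ?thesis using lt_trans[OF ok om W] ltm by blast
  qed
  then show ?thesis using g(1) by blast
qed

(* Every polynomial bounded by L has a normal form bounded by L: the term at L is either kept
   (L irreducible) or cancelled by an S-word with leading word L; the rest is below L. *)
lemma normal_form_le:
  assumes L: "oword ar L"
  shows "\<forall>f. opoly ar f \<and> (\<forall>k\<in>Poly_Mapping.keys f. k = L \<or> lt k L) \<longrightarrow>
    (\<exists>g. normal_form f g \<and> (\<forall>k\<in>Poly_Mapping.keys g. k = L \<or> lt k L))"
proof (rule oword_induct[OF L])
  fix L assume hyp: "oword ar L" and IH: "\<And>V. oword ar V \<Longrightarrow> lt V L \<Longrightarrow>
    \<forall>f. opoly ar f \<and> (\<forall>k\<in>Poly_Mapping.keys f. k = V \<or> lt k V) \<longrightarrow>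
    (\<exists>g. normal_form f g \<and> (\<forall>k\<in>Poly_Mapping.keys g. k = V \<or> lt k V))"
  have below: "\<exists>g. normal_form f1 g \<and> (\<forall>k\<in>Poly_Mapping.keys g. lt k L)"
    if "opoly ar f1" "\<forall>k\<in>Poly_Mapping.keys f1. lt k L" for f1
  proof (rule normal_form_lt_from_le[OF _ hyp that])
    fix V and f :: "('x,'o,'k) opoly" assume "oword ar V" "lt V L" "opoly ar f" "\<forall>k\<in>Poly_Mapping.keys f. k = V \<or> lt k V"
    then show "\<exists>g. normal_form f g \<and> (\<forall>k\<in>Poly_Mapping.keys g. k = V \<or> lt k V)"
      using IH by blast
  qed
  show "\<forall>f. opoly ar f \<and> (\<forall>k\<in>Poly_Mapping.keys f. k = L \<or> lt k L) \<longrightarrow>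
    (\<exists>g. normal_form f g \<and> (\<forall>k\<in>Poly_Mapping.keys g. k = L \<or> lt k L))"
  proof (intro allI impI, elim conjE)
    fix f :: "('x,'o,'k) opoly" assume fo: "opoly ar f" and fk: "\<forall>k\<in>Poly_Mapping.keys f. k = L \<or> lt k L"
    define c where "c = Poly_Mapping.lookup f L"
    show "\<exists>g. normal_form f g \<and> (\<forall>k\<in>Poly_Mapping.keys g. k = L \<or> lt k L)"
    proof (cases "L \<in> Irr ar lt S")
      case True
      define f1 where "f1 = f - Poly_Mapping.single L c"
      obtain g1 where g1: "normal_form f1 g1" "\<forall>k\<in>Poly_Mapping.keys g1. lt k L"
        using below drop_top_term[OF fo fk hyp] unfolding f1_def c_def by blast
      define g where "g = g1 + Poly_Mapping.single L c"
      have kg: "Poly_Mapping.keys g \<subseteq> Poly_Mapping.keys g1 \<union> {L}"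
        unfolding g_def using keys_add[of g1 "Poly_Mapping.single L c"] by (auto split: if_splits)
      have "f - g = f1 - g1" unfolding g_def f1_def by simp
      then have "normal_form f g" using g1(1) kg True unfolding normal_form_def by auto
      then show ?thesis using kg g1(2) by blast
    next
      case False
      then obtain u s where us: "star_word ar u" "s \<in> S" "L = subst u (lead lt s)"
        using hyp unfolding Irr_def by blast
      define f1 where "f1 = f - scale c (subst_poly u s)"
      have f1: "opoly ar f1" "\<forall>k\<in>Poly_Mapping.keys f1. lt k L" "f - f1 \<in> Id ar S"
        using cancel_top_term[OF fo fk us] unfolding f1_def c_def by blast+
      obtain g1 where g1: "normal_form f1 g1" "\<forall>k\<in>Poly_Mapping.keys g1. lt k L"
        using below[OF f1(1,2)] by blast
      have "f1 - g1 \<in> Id ar S" using g1(1) unfolding normal_form_def by blast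
      with f1(3) have "(f - f1) + (f1 - g1) \<in> Id ar S" unfolding Id_eq_span by (rule kspan_add)
      then have "normal_form f g1" using g1(1) unfolding normal_form_def by simp
      then show ?thesis using g1(2) by blast
    qed
  qed
qed

(* Every Omega-polynomial has a normal form: Irr(S) spans the quotient, for any S. *)
lemma normal_form_exists:
  assumes fo: "opoly ar f"
  shows "\<exists>g. normal_form f g"
proof (cases "f = 0")
  case True then show ?thesis by (intro exI[of _ 0]) (simp add: normal_form_def Id_eq_span kspan.zero)
next
  case False
  have "\<forall>k\<in>Poly_Mapping.keys f. k = lead lt f \<or> lt k (lead lt f)" using key_lt_lead[OF fo False] by blast
  then show ?thesis using normal_form_le[OF lead_oword[OF fo False]] fo by blast
qed

lemma normal_form_lt:
  assumes "oword ar W" "opoly ar f" "\<forall>k\<in>Poly_Mapping.keys f. lt k W"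
  shows "\<exists>g. normal_form f g \<and> (\<forall>k\<in>Poly_Mapping.keys g. lt k W)"
proof (rule normal_form_lt_from_le[OF _ assms])
  fix V and f :: "('x,'o,'k) opoly" assume "oword ar V" "lt V W" "opoly ar f" "\<forall>k\<in>Poly_Mapping.keys f. k = V \<or> lt k V"
  then show "\<exists>g. normal_form f g \<and> (\<forall>k\<in>Poly_Mapping.keys g. k = V \<or> lt k V)"
    using normal_form_le by blast
qed

(* (II) implies that Irr(S) is linearly independent modulo Id(S): the leading word of a nonzero
   element of Id(S) is reducible, so it cannot be supported on Irr(S). *)
lemma lead_divisible_Irr_independent:
  assumes lead_div: lead_divisible and g: "Poly_Mapping.keys g \<subseteq> Irr ar lt S" "g \<in> Id ar S"
  shows "g = 0"
proof (rule ccontr)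
  assume nz: "g \<noteq> 0"
  then obtain u s where us: "star_word ar u" "s \<in> S" "lead lt g = subst u (lead lt s)"
    using lead_div g(2) unfolding lead_divisible_def by blast
  have "lead lt g \<in> Irr ar lt S" using lead_in_keys[OF Id_opoly[OF g(2)] nz] g(1) by blast
  then show False using us unfolding Irr_def by blast
qed

(* Conversely, if Irr(S) is independent modulo Id(S), then (II) holds: if the leading word W of
   f in Id(S) were irreducible, then (term of f at W) + (normal form of the rest, below W) would
   be a nonzero element of Id(S) supported on Irr(S). *)
lemma Irr_independent_lead_divisible:
  assumes indep: "\<forall>g. Poly_Mapping.keys g \<subseteq> Irr ar lt S \<and> g \<in> Id ar S \<longrightarrow> g = 0"
  shows lead_divisible
  unfolding lead_divisible_def
proof (intro ballI impI)
  fix f assume f: "f \<in> Id ar S" "f \<noteq> 0"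
  show "\<exists>u s. star_word ar u \<and> s \<in> S \<and> lead lt f = subst u (lead lt s)"
  proof (rule ccontr)
    assume irreducible: "\<not> (\<exists>u s. star_word ar u \<and> s \<in> S \<and> lead lt f = subst u (lead lt s))"
    define W where "W = lead lt f"
    define c where "c = Poly_Mapping.lookup f W"
    define f1 where "f1 = f - Poly_Mapping.single W c"
    have fo: "opoly ar f" using Id_opoly[OF f(1)] .
    have oW: "oword ar W" unfolding W_def using lead_oword[OF fo f(2)] .
    have WI: "W \<in> Irr ar lt S" unfolding Irr_def W_def using irreducible oW W_def by blast
    have c0: "c \<noteq> 0" unfolding c_def W_def using lead_in_keys[OF fo f(2)] by (simp add: in_keys_iff)
    have fk: "\<forall>k\<in>Poly_Mapping.keys f. k = W \<or> lt k W" using key_lt_lead[OF fo f(2)] unfolding W_def by blast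
    obtain g1 where g1: "normal_form f1 g1" "\<forall>k\<in>Poly_Mapping.keys g1. lt k W"
      using normal_form_lt[OF oW] drop_top_term[OF fo fk oW] unfolding f1_def c_def by blast
    define g where "g = g1 + Poly_Mapping.single W c"
    have "Poly_Mapping.lookup g1 W = 0" using g1(2) lt_irrefl[OF oW] by (auto simp: in_keys_iff)
    then have "Poly_Mapping.lookup g W = c" unfolding g_def by (simp add: lookup_add)
    then have gnz: "g \<noteq> 0" using c0 by auto
    have "Poly_Mapping.keys g \<subseteq> Poly_Mapping.keys g1 \<union> {W}"
      unfolding g_def using keys_add[of g1 "Poly_Mapping.single W c"] by (auto split: if_splits)
    then have gI: "Poly_Mapping.keys g \<subseteq> Irr ar lt S" using g1(1) WI unfolding normal_form_def by blast
    have "f1 - g1 \<in> Id ar S" using g1(1) unfolding normal_form_def by blast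
    with f(1) have "f - (f1 - g1) \<in> Id ar S" unfolding Id_eq_span by (rule kspan_diff)
    moreover have "f - (f1 - g1) = g" unfolding g_def f1_def by simp
    ultimately show False using indep gI gnz by auto
  qed
qed

end

theorem theorem3p5:
  fixes ar :: "'o \<Rightarrow> nat"
    and lt :: "('x, 'o) oword \<Rightarrow> ('x, 'o) oword \<Rightarrow> bool"
    and S :: "('x, 'o, 'k::comm_ring_1) opoly set"
  assumes mo: "monomial_ordering ar lt"
    and S_poly: "\<forall>s \<in> S. opoly ar s \<and> monic lt s"
  shows "(GSB ar lt S \<longleftrightarrow>
            (\<forall>f \<in> Id ar S. f \<noteq> 0 \<longrightarrow>
               (\<exists>u s. star_word ar u \<and> s \<in> S \<and> lead lt f = subst u (lead lt s))))
       \<and> ((\<forall>f \<in> Id ar S. f \<noteq> 0 \<longrightarrow>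
               (\<exists>u s. star_word ar u \<and> s \<in> S \<and> lead lt f = subst u (lead lt s)))
          \<longleftrightarrow>
          (\<forall>f \<in> Id ar S. f \<noteq> 0 \<longrightarrow>
               (\<exists>(n::nat) (\<alpha>::nat \<Rightarrow> 'k) u s.
                  (\<forall>i < n. star_word ar (u i) \<and> s i \<in> S) \<and>
                  f = (\<Sum>i < n. scale (\<alpha> i) (subst_poly (u i) (s i))) \<and>
                  (\<forall>i j. i < j \<and> j < n \<longrightarrow>
                     lt (subst (u j) (lead lt (s j))) (subst (u i) (lead lt (s i)))))))
       \<and> ((\<forall>f \<in> Id ar S. f \<noteq> 0 \<longrightarrow>
               (\<exists>u s. star_word ar u \<and> s \<in> S \<and> lead lt f = subst u (lead lt s)))
          \<longleftrightarrow>
          ((\<forall>f. opoly ar f \<longrightarrow> (\<exists>g. Poly_Mapping.keys g \<subseteq> Irr ar lt S \<and> f - g \<in> Id ar S)) \<and>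
           (\<forall>g. Poly_Mapping.keys g \<subseteq> Irr ar lt S \<and> g \<in> Id ar S \<longrightarrow> g = 0)))"
proof -
  interpret S: monic_set ar lt S
    using mo S_poly by unfold_locales auto
  have I_iff_II: "GSB ar lt S \<longleftrightarrow> S.lead_divisible"
    using S.GSB_lead_divisible S.lead_divisible_GSB unfolding S.lead_divisible_def by blast
  have II_iff_III: "S.lead_divisible \<longleftrightarrow>
      (\<forall>f. opoly ar f \<longrightarrow> (\<exists>g. Poly_Mapping.keys g \<subseteq> Irr ar lt S \<and> f - g \<in> Id ar S)) \<and>
      (\<forall>g. Poly_Mapping.keys g \<subseteq> Irr ar lt S \<and> g \<in> Id ar S \<longrightarrow> g = 0)"
  proof
    assume lead_div: S.lead_divisible
    show "(\<forall>f. opoly ar f \<longrightarrow> (\<exists>g. Poly_Mapping.keys g \<subseteq> Irr ar lt S \<and> f - g \<in> Id ar S)) \<and>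
      (\<forall>g. Poly_Mapping.keys g \<subseteq> Irr ar lt S \<and> g \<in> Id ar S \<longrightarrow> g = 0)"
      using S.normal_form_exists S.lead_divisible_Irr_independent[OF lead_div]
      unfolding S.normal_form_def by blast
  next
    assume "(\<forall>f. opoly ar f \<longrightarrow> (\<exists>g. Poly_Mapping.keys g \<subseteq> Irr ar lt S \<and> f - g \<in> Id ar S)) \<and>
      (\<forall>g. Poly_Mapping.keys g \<subseteq> Irr ar lt S \<and> g \<in> Id ar S \<longrightarrow> g = 0)"
    then show S.lead_divisible using S.Irr_independent_lead_divisible by blast
  qed
  show ?thesis
    using I_iff_II S.lead_divisible_iff_ordered_reps II_iff_III
    unfolding S.lead_divisible_def by (intro conjI)
qed

end
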